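(* There exist a universal constant $r_0>0$ and a nonpositive Lipschitz function $h:Q_1\to\mathbb R$, which is $C^2$ with respect to $x$ on the set where $h$ is negative, such that for every $r\le r_0$, with $\tilde\phi=\Lambda_0\, r\,\eta(1/r)\,\phi$, the function $h$ solves in the viscosity sense \[ P^+(D^2h)-h_t+\tilde{\phi}(|Dh|)\leq g \quad\text{in } Q_1 \] for some continuous bounded function $g:Q_1\to\mathbb R$ with $\operatorname{supp} g\subset K_1$. Moreover $h\le -2$ in $K_3$ and $h=0$ on $\partial_pQ_1$.
   Context: Let $n\ge 1$ and $0<\lambda\le\Lambda$. For a real symmetric $n\times n$ matrix $M$ with eigenvalues $e_i$, $P^+(M)=\Lambda\sum_{e_i>0}e_i+\lambda\sum_{e_i<0}e_i$. The function $\phi:[0,\infty)\to[0,\infty)$ has the form $\phi(t)=\eta(t)t$ where: (P1) $\phi$ is increasing, locally Lipschitz on $(0,\infty)$, $\phi(t)\ge t$; $\eta:[0,\infty)\to[1,\infty)$ is nonincreasing on $(0,1)$ and nondecreasing on $[1,\infty)$; (P2) $\lim_{t\to\infty}\frac{t\eta'(t)}{\eta(t)}\log\eta(t)=0$; (P3) there is a constant $\Lambda_0$ with $\eta(st)\le\Lambda_0\eta(s)\eta(t)$ for all $s,t>0$. Universal constants depend only on $n,\lambda,\Lambda,\phi$. For $x\in\mathbb R^n$, $|x|_\infty=\max_i|x_i|$; $Q_1=\{|x|_\infty<1\}\times(-1,0)$, and its parabolic boundary is $\partial_pQ_1=\{|x|_\infty<1\}\times\{-1\}\cup\{|x|_\infty=1\}\times[-1,0]$.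 With $c_n=(10n)^{-1}$: $K_1=(-c_n,c_n)^n\times(-1,-1+c_n^2)$ and $K_3=(-3c_n,3c_n)^n\times(-1+c_n^2,0)$. "$h$ solves $P^+(D^2h)-h_t+\tilde\phi(|Dh|)\le g$ in the viscosity sense" means: whenever $\theta\in C^2$ satisfies $\theta\le h$ near $(x_0,t_0)\in Q_1$ with equality at $(x_0,t_0)$, then $P^+(D^2\theta)-\theta_t+\tilde\phi(|D\theta|)\le g$ at $(x_0,t_0)$. *)

theory Defs
  imports "HOL-Analysis.Analysis" "HOL-Computational_Algebra.Polynomial"
begin

definition linf :: "real^'n \<Rightarrow> real" where
  "linf x = Max (range (\<lambda>i. \<bar>x $ i\<bar>))"

definition Q1 :: "((real^'n) \<times> real) set" where
  "Q1 = {(x,t). linf x < 1 \<and> -1 < t \<and> t < 0}"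

definition parab_bdry :: "((real^'n) \<times> real) set" where
  "parab_bdry = {(x,t). linf x < 1 \<and> t = -1} \<union> {(x,t). linf x = 1 \<and> -1 \<le> t \<and> t \<le> 0}"

definition cn :: "'n::finite itself \<Rightarrow> real" where
  "cn _ = 1 / (10 * real CARD('n))"

definition K1 :: "((real^'n) \<times> real) set" where
  "K1 = {(x,t). (\<forall>i. -cn TYPE('n) < x $ i \<and> x $ i < cn TYPE('n))
               \<and> -1 < t \<and> t < -1 + (cn TYPE('n))^2}"

definition K3 :: "((real^'n) \<times> real) set" where
  "K3 = {(x,t). (\<forall>i. -3 * cn TYPE('n) < x $ i \<and> x $ i < 3 * cn TYPE('n))
               \<and> -1 + (cn TYPE('n))^2 < t \<and> t < 0}"

text \<open>Characteristic polynomial det(X I - M); eigenvalues with multiplicity are its roots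
  counted with their order.\<close>
definition charpoly :: "real^'n^'n \<Rightarrow> real poly" where
  "charpoly M = det (\<chi> i j. if i = j then [:- (M $ i $ j), 1:] else [:- (M $ i $ j):])"

definition pucci_max :: "real \<Rightarrow> real \<Rightarrow> real^'n^'n \<Rightarrow> real" where
  "pucci_max lam Lam M =
     Lam * (\<Sum>e\<in>{e. poly (charpoly M) e = 0 \<and> e > 0}. real (order e (charpoly M)) * e)
   + lam * (\<Sum>e\<in>{e. poly (charpoly M) e = 0 \<and> e < 0}. real (order e (charpoly M)) * e)"

definition C2x_on :: "((real^'n) \<times> real) set \<Rightarrow> ((real^'n) \<times> real \<Rightarrow> real) \<Rightarrow> bool" where
  "C2x_on S h \<longleftrightarrow> (\<exists>(Dh :: (real^'n) \<times> real \<Rightarrow> real^'n) (D2h :: (real^'n) \<times> real \<Rightarrow> real^'n^'n).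
      continuous_on S Dh \<and> continuous_on S D2h \<and>
      (\<forall>(x,t)\<in>S. ((\<lambda>y. h (y,t)) has_derivative (\<lambda>v. Dh (x,t) \<bullet> v)) (at x) \<and>
                  ((\<lambda>y. Dh (y,t)) has_derivative (\<lambda>v. D2h (x,t) *v v)) (at x)))"

text \<open>Viscosity sense of  P^+(D^2 h) - h_t + phit(|Dh|) \<le> g  in Q1 (test functions touching
  from below).\<close>
definition visc_ineq ::
  "real \<Rightarrow> real \<Rightarrow> (real \<Rightarrow> real) \<Rightarrow> ((real^'n) \<times> real \<Rightarrow> real) \<Rightarrow> ((real^'n) \<times> real \<Rightarrow> real) \<Rightarrow> bool" where
  "visc_ineq lam Lam phit h g \<longleftrightarrow>
    (\<forall>p0\<in>Q1. \<forall>(\<theta> :: (real^'n) \<times> real \<Rightarrow> real) (G :: (real^'n) \<times> real \<Rightarrow> (real^'n) \<times> real) G'.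
       (\<exists>U. open U \<and> p0 \<in> U \<and> U \<subseteq> Q1 \<and>
          (\<forall>q\<in>U. (\<theta> has_derivative (\<lambda>v. G q \<bullet> v)) (at q) \<and> (G has_derivative G' q) (at q)) \<and>
          (\<forall>v. continuous_on U (\<lambda>q. G' q v)) \<and>
          (\<forall>q\<in>U. \<theta> q \<le> h q)) \<and> \<theta> p0 = h p0
       \<longrightarrow> pucci_max lam Lam (\<chi> i j. fst (G' p0 (axis j 1, 0)) $ i)
             - snd (G p0) + phit (norm (fst (G p0))) \<le> g p0)"

end

theory Submission
  imports Defs "HOL-Real_Asymp.Real_Asymp"
begin

section \<open>Eigenvalues and the Pucci operator\<close>

lemma poly_charpoly: "poly (charpoly M) e = det (e *\<^sub>R mat 1 - M)"
proof -
  have "poly (if i = j then [:- (M $ i $ j), 1:] else [:- (M $ i $ j):]) e = (e *\<^sub>R mat 1 - M) $ i $ j"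
    for i j
    by (simp add: mat_def)
  then show ?thesis
    unfolding charpoly_def det_def by (simp add: poly_sum poly_prod)
qed

lemma charpoly_root_iff_eigenvalue:
  fixes M :: "real^'n^'n"
  shows "poly (charpoly M) e = 0 \<longleftrightarrow> (\<exists>w. w \<noteq> 0 \<and> M *v w = e *\<^sub>R w)"
proof -
  have "det A = 0 \<longleftrightarrow> (\<exists>w. w \<noteq> 0 \<and> A *v w = 0)" for A :: "real^'n^'n"
    using invertible_det_nz[of A] invertible_left_inverse[of A] matrix_left_invertible_ker[of A]
    by auto
  moreover have "(e *\<^sub>R mat 1 - M) *v w = e *\<^sub>R w - M *v w" for w
    by (metis matrix_vector_mult_diff_rdistrib matrix_vector_mul_lid scaleR_matrix_vector_assoc)
  ultimately show ?thesis
    unfolding poly_charpoly by (metis eq_iff_diff_eq_0)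
qed

lemma eigenvalue_le_if_quadratic_form_le:
  fixes M :: "real^'n^'n"
  assumes "\<forall>u. u \<bullet> (M *v u) \<le> \<beta> * (u \<bullet> u)" and "poly (charpoly M) e = 0"
  shows "e \<le> \<beta>"
proof -
  obtain w where w: "w \<noteq> 0" "M *v w = e *\<^sub>R w"
    using assms(2) charpoly_root_iff_eigenvalue by blast
  then have "e * (w \<bullet> w) \<le> \<beta> * (w \<bullet> w)"
    using assms(1)[rule_format, of w] by simp
  with w show ?thesis by simp
qed

lemma charpoly_nonzero: "charpoly (M::real^'n^'n) \<noteq> 0"
proof
  obtain K where K: "\<forall>u. norm (M *v u) \<le> norm u * K"
    using bounded_linear.pos_bounded[of "(*v) M"] matrix_vector_mul_bounded_linear by blast
  have "u \<bullet> (M *v u) \<le> K * (u \<bullet> u)" for u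
  proof -
    have "u \<bullet> (M *v u) \<le> norm u * norm (M *v u)"
      using Cauchy_Schwarz_ineq2[of u "M *v u"] by linarith
    also have "\<dots> \<le> norm u * (norm u * K)"
      using K by (simp add: mult_left_mono)
    finally have "u \<bullet> (M *v u) \<le> norm u * (norm u * K)" .
    then show ?thesis by (simp add: dot_square_norm power2_eq_square mult_ac)
  qed
  moreover assume "charpoly M = 0"
  ultimately show False
    using eigenvalue_le_if_quadratic_form_le[of M K "K + 1"] by simp
qed

lemma degree_charpoly_le: "degree (charpoly (M::real^'n^'n)) \<le> CARD('n)"
  unfolding charpoly_def det_def
proof (rule degree_sum_le)
  fix p assume "p \<in> {p. p permutes (UNIV::'n set)}"
  let ?A = "(\<chi> i j. if i = j then [:- (M $ i $ j), 1:] else [:- (M $ i $ j):]) :: real poly^'n^'n"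
  have "degree (of_int (sign p) * prod (\<lambda>i. ?A $ i $ p i) UNIV)
        \<le> degree (of_int (sign p) :: real poly) + degree (prod (\<lambda>i. ?A $ i $ p i) UNIV)"
    by (rule degree_mult_le)
  also have "degree (prod (\<lambda>i. ?A $ i $ p i) UNIV) \<le> sum (degree \<circ> (\<lambda>i. ?A $ i $ p i)) UNIV"
    by (rule degree_prod_sum_le) simp
  also have "\<dots> \<le> sum (\<lambda>i. 1) (UNIV::'n set)"
    by (rule sum_mono) auto
  finally show "degree (of_int (sign p) * prod (\<lambda>i. ?A $ i $ p i) UNIV) \<le> CARD('n)"
    by (simp add: degree_of_int)
qed simp

lemma symmetric_matrix_inner_commute:
  fixes M :: "real^'n^'n"
  assumes "transpose M = M"
  shows "x \<bullet> (M *v y) = y \<bullet> (M *v x)"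
  by (metis assms dot_lmul_matrix inner_commute transpose_matrix_vector)

lemma quadratic_nonneg_imp_linear_coeff_zero:
  fixes a b :: real
  assumes "\<forall>z. 0 \<le> z * a + z\<^sup>2 * b"
  shows "a = 0"
proof (rule ccontr)
  assume "a \<noteq> 0"
  define d where "d = \<bar>b\<bar> + 1"
  have d: "0 < d" "b \<le> d" unfolding d_def by auto
  define z where "z = - a / (2 * d)"
  have "z * a + z\<^sup>2 * b \<le> z * a + z\<^sup>2 * d"
    using d by (simp add: mult_left_mono)
  also have "\<dots> = - a\<^sup>2 / (4 * d)"
    unfolding z_def using d by (simp add: field_simps power2_eq_square)
  also have "\<dots> < 0"
    using \<open>a \<noteq> 0\<close> d by (simp add: divide_neg_pos)
  finally show False using assms by (meson not_le)
qed

lemma exists_eigenvalue_le_rayleigh_quotient: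
  fixes M :: "real^'n^'n"
  assumes sym: "transpose M = M" and v: "v \<noteq> 0"
  shows "\<exists>e. poly (charpoly M) e = 0 \<and> e \<le> (v \<bullet> (M *v v)) / (v \<bullet> v)"
proof -
  let ?Q = "\<lambda>u. u \<bullet> (M *v u)"
  have "continuous_on (sphere 0 1) ?Q"
    by (intro continuous_intros linear_continuous_on) (simp add: linear_linear)
  then obtain u where u: "u \<in> sphere 0 1" and umin: "\<forall>y\<in>sphere 0 1. ?Q u \<le> ?Q y"
    using continuous_attains_inf[of "sphere 0 1" ?Q] by auto
  define e where "e = ?Q u"
  have ge: "e * (y \<bullet> y) \<le> ?Q y" for y
  proof (cases "y = 0")
    case False
    then have "e \<le> ?Q ((1 / norm y) *\<^sub>R y)"
      unfolding e_def by (intro umin[rule_format]) simp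
    with False show ?thesis
      by (simp add: matrix_vector_mult_scaleR dot_square_norm field_simps power2_eq_square)
  qed simp
  define r where "r = M *v u - e *\<^sub>R u"
  \<comment> \<open>\<open>u\<close> minimises the Rayleigh quotient, so the quadratic \<open>s \<mapsto> Q(u + s r) - e |u + s r|\<^sup>2\<close>
      is nonnegative and vanishes at \<open>0\<close>; its linear coefficient \<open>2 |r|\<^sup>2\<close> must vanish.\<close>
  have "2 * (r \<bullet> r) = 0"
  proof (rule quadratic_nonneg_imp_linear_coeff_zero[where b = "?Q r - e * (r \<bullet> r)"], rule allI)
    fix s :: real
    have expand: "?Q (u + s *\<^sub>R r) = e + 2 * s * (r \<bullet> (M *v u)) + s\<^sup>2 * ?Q r"
      using symmetric_matrix_inner_commute[OF sym, of u r] unfolding e_def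
      by (simp add: matrix_vector_right_distrib matrix_vector_mult_scaleR inner_add_left
          inner_add_right power2_eq_square algebra_simps)
    have norm: "(u + s *\<^sub>R r) \<bullet> (u + s *\<^sub>R r) = 1 + 2 * s * (r \<bullet> u) + s\<^sup>2 * (r \<bullet> r)"
      using u by (simp add: inner_add_left inner_add_right power2_eq_square norm_eq_1
          inner_commute[of u r] algebra_simps)
    have "r \<bullet> (M *v u) - e * (r \<bullet> u) = r \<bullet> r"
      unfolding r_def by (simp add: inner_diff_right)
    then have "?Q (u + s *\<^sub>R r) - e * ((u + s *\<^sub>R r) \<bullet> (u + s *\<^sub>R r))
        = s * (2 * (r \<bullet> r)) + s\<^sup>2 * (?Q r - e * (r \<bullet> r))"
      unfolding expand norm by (simp add: algebra_simps)
    then show "0 \<le> s * (2 * (r \<bullet> r)) + s\<^sup>2 * (?Q r - e * (r \<bullet> r))"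
      using ge[of "u + s *\<^sub>R r"] by simp
  qed
  then have "M *v u = e *\<^sub>R u" unfolding r_def by simp
  moreover have "u \<noteq> 0" using u by auto
  ultimately have "poly (charpoly M) e = 0" using charpoly_root_iff_eigenvalue by blast
  moreover have "e \<le> ?Q v / (v \<bullet> v)" using ge[of v] v by (simp add: field_simps)
  ultimately show ?thesis by blast
qed

lemma positive_eigenvalue_sum_le:
  fixes M :: "real^'n^'n"
  assumes "0 \<le> \<beta>" and "\<forall>u. u \<bullet> (M *v u) \<le> \<beta> * (u \<bullet> u)"
  shows "(\<Sum>e\<in>{e. poly (charpoly M) e = 0 \<and> e > 0}. real (order e (charpoly M)) * e)
           \<le> real CARD('n) * \<beta>"
proof -
  let ?p = "charpoly M"
  let ?P = "{e. poly ?p e = 0 \<and> e > 0}"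
  have roots: "finite {e. poly ?p e = 0}"
    using poly_roots_finite[OF charpoly_nonzero] .
  have "(\<Sum>e\<in>?P. order e ?p) \<le> (\<Sum>e | poly ?p e = 0. order e ?p)"
    using roots by (intro sum_mono2) auto
  also have "\<dots> \<le> degree ?p"
    by (rule sum_order_le_degree[OF charpoly_nonzero])
  also have "\<dots> \<le> CARD('n)"
    by (rule degree_charpoly_le)
  finally have multiplicities: "real (\<Sum>e\<in>?P. order e ?p) \<le> real CARD('n)"
    by linarith
  have "(\<Sum>e\<in>?P. real (order e ?p) * e) \<le> (\<Sum>e\<in>?P. real (order e ?p) * \<beta>)"
    using eigenvalue_le_if_quadratic_form_le[OF assms(2)] by (intro sum_mono mult_left_mono) auto
  also have "\<dots> = real (\<Sum>e\<in>?P. order e ?p) * \<beta>"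
    by (simp add: sum_distrib_right)
  also have "\<dots> \<le> real CARD('n) * \<beta>"
    using multiplicities assms(1) by (rule mult_right_mono)
  finally show ?thesis .
qed

lemma negative_eigenvalue_sum_nonpos:
  "(\<Sum>e\<in>{e. poly (charpoly M) e = 0 \<and> e < 0}. real (order e (charpoly M)) * e) \<le> 0"
  by (intro sum_nonpos mult_nonneg_nonpos) auto

lemma negative_eigenvalue_sum_le:
  fixes M :: "real^'n^'n"
  assumes "poly (charpoly M) e0 = 0" and "e0 < 0"
  shows "(\<Sum>e\<in>{e. poly (charpoly M) e = 0 \<and> e < 0}. real (order e (charpoly M)) * e) \<le> e0"
proof -
  let ?p = "charpoly M"
  let ?N = "{e. poly ?p e = 0 \<and> e < 0}"
  have "finite ?N"
    using poly_roots_finite[OF charpoly_nonzero] by (rule finite_subset[rotated]) auto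
  have e0: "e0 \<in> ?N" using assms by simp
  have "1 \<le> order e0 ?p"
    using assms(1) charpoly_nonzero order_root by (metis less_one not_le)
  then have "real (order e0 ?p) * e0 \<le> e0"
    using e0 by (simp add: mult_le_cancel_right1)
  moreover have "(\<Sum>e\<in>?N - {e0}. real (order e ?p) * e) \<le> 0"
    by (intro sum_nonpos mult_nonneg_nonpos) auto
  moreover have "(\<Sum>e\<in>?N. real (order e ?p) * e)
      = real (order e0 ?p) * e0 + (\<Sum>e\<in>?N - {e0}. real (order e ?p) * e)"
    by (rule sum.remove[OF \<open>finite ?N\<close> e0])
  ultimately show ?thesis by linarith
qed

lemma pucci_max_le_if_quadratic_form_le:
  fixes M :: "real^'n^'n"
  assumes "0 \<le> lam" "0 \<le> Lam" "transpose M = M" "0 \<le> \<beta>" "0 \<le> \<gamma>"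
    and M: "\<forall>u. u \<bullet> (M *v u) \<le> \<beta> * (u \<bullet> u) - \<gamma> * (x \<bullet> u)\<^sup>2"
  shows "pucci_max lam Lam M \<le> Lam * CARD('n) * \<beta> + lam * min 0 (\<beta> - \<gamma> * (x \<bullet> x))"
proof -
  let ?S = "\<lambda>P. \<Sum>e\<in>{e. poly (charpoly M) e = 0 \<and> P e}. real (order e (charpoly M)) * e"
  have "\<forall>u. u \<bullet> (M *v u) \<le> \<beta> * (u \<bullet> u)"
    using M \<open>0 \<le> \<gamma>\<close> by (smt (verit) mult_nonneg_nonneg zero_le_power2)
  then have pos: "?S (\<lambda>e. e > 0) \<le> real CARD('n) * \<beta>"
    by (rule positive_eigenvalue_sum_le[OF \<open>0 \<le> \<beta>\<close>])
  have neg: "?S (\<lambda>e. e < 0) \<le> min 0 (\<beta> - \<gamma> * (x \<bullet> x))"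
  proof (cases "\<beta> - \<gamma> * (x \<bullet> x) < 0")
    case True
    then have "x \<noteq> 0" using \<open>0 \<le> \<beta>\<close> by auto
    then obtain e where e: "poly (charpoly M) e = 0" "e \<le> (x \<bullet> (M *v x)) / (x \<bullet> x)"
      using exists_eigenvalue_le_rayleigh_quotient[OF \<open>transpose M = M\<close>] by blast
    have "x \<bullet> (M *v x) \<le> (\<beta> - \<gamma> * (x \<bullet> x)) * (x \<bullet> x)"
      using M[rule_format, of x] by (simp add: power2_eq_square algebra_simps)
    then have "(x \<bullet> (M *v x)) / (x \<bullet> x) \<le> \<beta> - \<gamma> * (x \<bullet> x)"
      using \<open>x \<noteq> 0\<close> by (simp add: divide_le_eq)
    then have "e \<le> \<beta> - \<gamma> * (x \<bullet> x)"
      using e(2) by linarith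
    then show ?thesis
      using negative_eigenvalue_sum_le[OF e(1)] True by simp
  qed (simp add: negative_eigenvalue_sum_nonpos)
  show ?thesis
    using mult_left_mono[OF pos \<open>0 \<le> Lam\<close>] mult_left_mono[OF neg \<open>0 \<le> lam\<close>]
    unfolding pucci_max_def by (simp add: mult_ac)
qed

section \<open>Second-order conditions at a point of contact\<close>

lemma has_real_derivative_along_line:
  fixes k :: "'a::real_normed_vector \<Rightarrow> real"
  assumes "(k has_derivative Dk) (at (x + s *\<^sub>R u))"
  shows "((\<lambda>s. k (x + s *\<^sub>R u)) has_real_derivative Dk u) (at s)"
proof -
  have "((\<lambda>s. x + s *\<^sub>R u) has_derivative (\<lambda>h. h *\<^sub>R u)) (at s)"
    by (intro derivative_eq_intros) auto
  from has_derivative_compose[OF this assms]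
  have "((\<lambda>s. k (x + s *\<^sub>R u)) has_derivative (\<lambda>h. Dk (h *\<^sub>R u))) (at s)"
    by (simp add: o_def)
  moreover have "(\<lambda>h. Dk (h *\<^sub>R u)) = (*) (Dk u)"
    using linear_scale[OF has_derivative_linear[OF assms]] by (auto simp: mult.commute)
  ultimately show ?thesis
    unfolding has_field_derivative_def by simp
qed

lemma local_min_derivatives:
  fixes f f' :: "real \<Rightarrow> real"
  assumes "0 < \<delta>"
    and f: "\<forall>s. \<bar>s\<bar> < \<delta> \<longrightarrow> (f has_real_derivative f' s) (at s)"
    and f': "(f' has_real_derivative f'') (at 0)"
    and min: "\<forall>s. \<bar>s\<bar> < \<delta> \<longrightarrow> f 0 \<le> f s"
  shows "f' 0 = 0" and "0 \<le> f''"
proof -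
  show f'0: "f' 0 = 0"
    using DERIV_local_min[of f "f' 0" 0 \<delta>] assms by simp
  show "0 \<le> f''"
  proof (rule ccontr)
    assume "\<not> 0 \<le> f''"
    moreover have "((\<lambda>y. f' y / y) \<longlongrightarrow> f'') (at_right 0)"
      using f' f'0 by (simp add: has_field_derivative_iff filterlim_at_split)
    ultimately have "eventually (\<lambda>y. f' y / y < 0) (at_right 0)"
      by (simp add: order_tendstoD(2))
    then obtain d where "0 < d" and d: "\<forall>y. 0 < y \<and> y < d \<longrightarrow> f' y / y < 0"
      unfolding eventually_at_right_field by auto
    define s where "s = min d \<delta> / 2"
    have s: "0 < s" "s < d" "s < \<delta>"
      using \<open>0 < d\<close> \<open>0 < \<delta>\<close> unfolding s_def by auto
    obtain z where z: "0 < z" "z < s" "f s - f 0 = (s - 0) * f' z"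
      using MVT2[of 0 s f f'] s f by force
    then have "f' z < 0"
      using d s by (simp add: divide_less_0_iff)
    then have "f s < f 0"
      using z s mult_pos_neg[of s "f' z"] by simp
    moreover have "f 0 \<le> f s"
      using min s by simp
    ultimately show False by simp
  qed
qed

lemma local_min_gradient_hessian:
  fixes f :: "'a::real_inner \<Rightarrow> real"
  assumes "open S" "x \<in> S"
    and f: "\<forall>y\<in>S. (f has_derivative (\<lambda>v. Df y \<bullet> v)) (at y)"
    and Df: "(Df has_derivative D2f) (at x)"
    and min: "\<forall>y\<in>S. f x \<le> f y"
  shows "Df x = 0" and "0 \<le> D2f u \<bullet> u"
proof -
  have along: "Df x \<bullet> u = 0 \<and> 0 \<le> D2f u \<bullet> u" for u
  proof -
    have "open ((\<lambda>s::real. x + s *\<^sub>R u) -` S)"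
      using \<open>open S\<close> by (intro continuous_open_vimage continuous_intros)
    moreover have "0 \<in> (\<lambda>s::real. x + s *\<^sub>R u) -` S"
      using \<open>x \<in> S\<close> by simp
    ultimately obtain \<delta> where "0 < \<delta>" and "ball 0 \<delta> \<subseteq> (\<lambda>s::real. x + s *\<^sub>R u) -` S"
      using open_contains_ball by blast
    then have \<delta>: "x + s *\<^sub>R u \<in> S" if "\<bar>s\<bar> < \<delta>" for s
      using that by (auto simp: subset_iff)
    have "((\<lambda>s. f (x + s *\<^sub>R u)) has_real_derivative Df (x + s *\<^sub>R u) \<bullet> u) (at s)"
      if "\<bar>s\<bar> < \<delta>" for s
      using has_real_derivative_along_line[of f "\<lambda>v. Df (x + s *\<^sub>R u) \<bullet> v"] f \<delta> that
      by blast
    moreover have "((\<lambda>s. Df (x + s *\<^sub>R u) \<bullet> u) has_real_derivative D2f u \<bullet> u) (at 0)"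
      using has_real_derivative_along_line[of "\<lambda>y. Df y \<bullet> u" "\<lambda>v. D2f v \<bullet> u" x 0 u]
        has_derivative_inner_left[OF Df] by simp
    moreover have "f (x + 0 *\<^sub>R u) \<le> f (x + s *\<^sub>R u)" if "\<bar>s\<bar> < \<delta>" for s
      using \<delta> min \<open>x \<in> S\<close> that by simp
    ultimately have "Df (x + 0 *\<^sub>R u) \<bullet> u = 0" "0 \<le> D2f u \<bullet> u"
      using local_min_derivatives[OF \<open>0 < \<delta>\<close>, of "\<lambda>s. f (x + s *\<^sub>R u)"
          "\<lambda>s. Df (x + s *\<^sub>R u) \<bullet> u" "D2f u \<bullet> u"] by auto
    then show ?thesis by simp
  qed
  show "Df x = 0" using along[of "Df x"] by simp
  show "0 \<le> D2f u \<bullet> u" using along by simp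
qed

lemma second_difference_mean_value:
  fixes \<theta> :: "'a::real_inner \<Rightarrow> real"
  assumes "convex S" and \<theta>: "\<forall>q\<in>S. (\<theta> has_derivative (\<lambda>v. G q \<bullet> v)) (at q)" and "0 < s"
    and corners: "p \<in> S" "p + s *\<^sub>R a \<in> S" "p + s *\<^sub>R b \<in> S" "p + s *\<^sub>R b + s *\<^sub>R a \<in> S"
  shows "\<exists>z. 0 < z \<and> z < s \<and>
    \<theta> (p + s *\<^sub>R b + s *\<^sub>R a) - \<theta> (p + s *\<^sub>R a) - \<theta> (p + s *\<^sub>R b) + \<theta> p
      = s * ((G (p + s *\<^sub>R b + z *\<^sub>R a) - G (p + z *\<^sub>R a)) \<bullet> a)"
proof -
  have segment: "q + \<tau> *\<^sub>R a \<in> S" if "q \<in> S" "q + s *\<^sub>R a \<in> S" "0 \<le> \<tau>" "\<tau> \<le> s" for q \<tau>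
  proof -
    have "(1 - \<tau> / s) *\<^sub>R q + (\<tau> / s) *\<^sub>R (q + s *\<^sub>R a) \<in> S"
      using that \<open>0 < s\<close> by (intro convexD[OF \<open>convex S\<close>]) auto
    moreover have "(1 - \<tau> / s) *\<^sub>R q + (\<tau> / s) *\<^sub>R (q + s *\<^sub>R a) = q + \<tau> *\<^sub>R a"
      using \<open>0 < s\<close> by (simp add: algebra_simps)
    ultimately show ?thesis by simp
  qed
  define \<phi> where "\<phi> \<tau> = \<theta> (p + s *\<^sub>R b + \<tau> *\<^sub>R a) - \<theta> (p + \<tau> *\<^sub>R a)" for \<tau>
  have "(\<phi> has_real_derivative (G (p + s *\<^sub>R b + \<tau> *\<^sub>R a) - G (p + \<tau> *\<^sub>R a)) \<bullet> a) (at \<tau>)"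
    if "0 \<le> \<tau>" "\<tau> \<le> s" for \<tau>
  proof -
    have "p + s *\<^sub>R b + \<tau> *\<^sub>R a \<in> S" "p + \<tau> *\<^sub>R a \<in> S"
      using segment[of "p + s *\<^sub>R b" \<tau>] segment[of p \<tau>] corners that by auto
    then show ?thesis
      unfolding \<phi>_def inner_diff_left
      by (intro DERIV_diff has_real_derivative_along_line[where Dk = "\<lambda>v. G _ \<bullet> v"] \<theta>[rule_format])
  qed
  then obtain z where "0 < z" "z < s"
    and "\<phi> s - \<phi> 0 = (s - 0) * ((G (p + s *\<^sub>R b + z *\<^sub>R a) - G (p + z *\<^sub>R a)) \<bullet> a)"
    using MVT2[OF \<open>0 < s\<close>, of \<phi> "\<lambda>\<tau>. (G (p + s *\<^sub>R b + \<tau> *\<^sub>R a) - G (p + \<tau> *\<^sub>R a)) \<bullet> a"]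
    by blast
  then show ?thesis
    unfolding \<phi>_def by (auto simp: algebra_simps)
qed

lemma linearization_error_inner_le:
  assumes "linear L"
    and G: "\<forall>y. norm (y - p) < d \<longrightarrow> norm (G y - G p - L (y - p)) \<le> \<eta> * norm (y - p)"
    and "norm w1 < d" "norm w2 < d"
  shows "\<bar>(G (p + w1) - G (p + w2)) \<bullet> a - L (w1 - w2) \<bullet> a\<bar> \<le> \<eta> * (norm w1 + norm w2) * norm a"
proof -
  define E where "E w = G (p + w) - G p - L w" for w
  have "(G (p + w1) - G (p + w2)) \<bullet> a - L (w1 - w2) \<bullet> a = (E w1 - E w2) \<bullet> a"
    unfolding E_def by (simp add: linear_diff[OF \<open>linear L\<close>] inner_diff_left)
  also have "\<bar>\<dots>\<bar> \<le> (norm (E w1) + norm (E w2)) * norm a"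
    by (metis Cauchy_Schwarz_ineq2 mult_right_mono norm_ge_zero norm_triangle_ineq4 order_trans)
  also have "\<dots> \<le> \<eta> * (norm w1 + norm w2) * norm a"
    using G[rule_format, of "p + w1"] G[rule_format, of "p + w2"] assms(3,4)
    by (intro mult_right_mono) (auto simp: E_def algebra_simps)
  finally show ?thesis .
qed

lemma second_difference_estimate:
  fixes \<theta> :: "'a::real_inner \<Rightarrow> real"
  assumes \<theta>: "\<forall>q\<in>ball p \<rho>. (\<theta> has_derivative (\<lambda>v. G q \<bullet> v)) (at q)"
    and "linear L" and G: "\<forall>y. norm (y - p) < \<rho> \<longrightarrow> norm (G y - G p - L (y - p)) \<le> \<eta> * norm (y - p)"
    and "0 \<le> \<eta>" "0 < s" and s: "s * (norm a + norm b) < \<rho>"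
  shows "\<bar>\<theta> (p + s *\<^sub>R b + s *\<^sub>R a) - \<theta> (p + s *\<^sub>R a) - \<theta> (p + s *\<^sub>R b) + \<theta> p - s\<^sup>2 * (L b \<bullet> a)\<bar>
    \<le> \<eta> * s\<^sup>2 * ((norm b + 2 * norm a) * norm a)"
proof -
  have small: "norm (\<sigma> *\<^sub>R b + \<tau> *\<^sub>R a) \<le> \<sigma> * norm b + \<tau> * norm a"
    if "0 \<le> \<sigma>" "0 \<le> \<tau>" for \<sigma> \<tau>
    using norm_triangle_ineq[of "\<sigma> *\<^sub>R b" "\<tau> *\<^sub>R a"] that by simp
  have dist: "dist p (p + w) = norm w" for w
    by (metis add_diff_cancel_left' dist_commute dist_norm)
  have ball: "p + (\<sigma> *\<^sub>R b + \<tau> *\<^sub>R a) \<in> ball p \<rho>" if "0 \<le> \<sigma>" "\<sigma> \<le> s" "0 \<le> \<tau>" "\<tau> \<le> s" for \<sigma> \<tau>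
  proof -
    have "\<sigma> * norm b \<le> s * norm b" "\<tau> * norm a \<le> s * norm a"
      using that by (auto intro: mult_right_mono)
    then have "\<sigma> * norm b + \<tau> * norm a \<le> s * (norm a + norm b)"
      by (simp add: distrib_left)
    then show ?thesis
      using small[of \<sigma> \<tau>] that s by (simp add: dist)
  qed
  have "p \<in> ball p \<rho>" "p + s *\<^sub>R a \<in> ball p \<rho>" "p + s *\<^sub>R b \<in> ball p \<rho>"
    "p + s *\<^sub>R b + s *\<^sub>R a \<in> ball p \<rho>"
    using ball[of 0 0] ball[of 0 s] ball[of s 0] ball[of s s] \<open>0 < s\<close> by (simp_all add: add.assoc)
  then obtain z where z: "0 < z" "z < s"
    and "\<theta> (p + s *\<^sub>R b + s *\<^sub>R a) - \<theta> (p + s *\<^sub>R a) - \<theta> (p + s *\<^sub>R b) + \<theta> p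
      = s * ((G (p + s *\<^sub>R b + z *\<^sub>R a) - G (p + z *\<^sub>R a)) \<bullet> a)"
    using second_difference_mean_value[OF convex_ball \<theta> \<open>0 < s\<close>] by blast
  then have mvt: "\<theta> (p + s *\<^sub>R b + s *\<^sub>R a) - \<theta> (p + s *\<^sub>R a) - \<theta> (p + s *\<^sub>R b) + \<theta> p
      = s * ((G (p + (s *\<^sub>R b + z *\<^sub>R a)) - G (p + z *\<^sub>R a)) \<bullet> a)"
    by (simp add: add.assoc)
  have "norm (s *\<^sub>R b + z *\<^sub>R a) < \<rho>" "norm (z *\<^sub>R a) < \<rho>"
    using ball[of s z] ball[of 0 z] z \<open>0 < s\<close> by (auto simp: dist)
  with G have "\<bar>(G (p + (s *\<^sub>R b + z *\<^sub>R a)) - G (p + z *\<^sub>R a)) \<bullet> a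
      - L ((s *\<^sub>R b + z *\<^sub>R a) - z *\<^sub>R a) \<bullet> a\<bar>
      \<le> \<eta> * (norm (s *\<^sub>R b + z *\<^sub>R a) + norm (z *\<^sub>R a)) * norm a"
    by (rule linearization_error_inner_le[OF \<open>linear L\<close>])
  also have "\<dots> \<le> \<eta> * (s * (norm b + 2 * norm a)) * norm a"
  proof -
    have "norm (s *\<^sub>R b + z *\<^sub>R a) + norm (z *\<^sub>R a) \<le> s * (norm b + 2 * norm a)"
      using small[of s z] z \<open>0 < s\<close> mult_right_mono[of z s "norm a"] by (simp add: algebra_simps)
    then show ?thesis
      using \<open>0 \<le> \<eta>\<close> by (intro mult_right_mono mult_left_mono) auto
  qed
  finally have "\<bar>(G (p + (s *\<^sub>R b + z *\<^sub>R a)) - G (p + z *\<^sub>R a)) \<bullet> a - s * (L b \<bullet> a)\<bar>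
      \<le> \<eta> * s * ((norm b + 2 * norm a) * norm a)"
    by (simp add: linear_scale[OF \<open>linear L\<close>] mult_ac)
  then have "s * \<bar>(G (p + (s *\<^sub>R b + z *\<^sub>R a)) - G (p + z *\<^sub>R a)) \<bullet> a - s * (L b \<bullet> a)\<bar>
      \<le> s * (\<eta> * s * ((norm b + 2 * norm a) * norm a))"
    using \<open>0 < s\<close> by (intro mult_left_mono) auto
  moreover have "\<theta> (p + s *\<^sub>R b + s *\<^sub>R a) - \<theta> (p + s *\<^sub>R a) - \<theta> (p + s *\<^sub>R b) + \<theta> p - s\<^sup>2 * (L b \<bullet> a)
      = s * ((G (p + (s *\<^sub>R b + z *\<^sub>R a)) - G (p + z *\<^sub>R a)) \<bullet> a - s * (L b \<bullet> a))"
    unfolding mvt by (simp add: power2_eq_square right_diff_distrib)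
  ultimately show ?thesis
    using \<open>0 < s\<close> by (simp add: abs_mult power2_eq_square mult_ac)
qed

lemma second_difference_tendsto:
  fixes \<theta> :: "'a::real_inner \<Rightarrow> real"
  assumes "open U" "p \<in> U" and \<theta>: "\<forall>q\<in>U. (\<theta> has_derivative (\<lambda>v. G q \<bullet> v)) (at q)"
    and G: "(G has_derivative L) (at p)"
  shows "((\<lambda>s. (\<theta> (p + s *\<^sub>R b + s *\<^sub>R a) - \<theta> (p + s *\<^sub>R a) - \<theta> (p + s *\<^sub>R b) + \<theta> p) / s\<^sup>2)
           \<longlongrightarrow> L b \<bullet> a) (at_right 0)"
proof (rule tendstoI)
  fix \<epsilon> :: real assume "0 < \<epsilon>"
  define K where "K = (norm b + 2 * norm a) * norm a + 1"
  have "0 < K" unfolding K_def by (intro add_nonneg_pos mult_nonneg_nonneg) auto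
  then obtain d where "0 < d"
    and d: "\<forall>y. norm (y - p) < d \<longrightarrow> norm (G y - G p - L (y - p)) \<le> \<epsilon> / K * norm (y - p)"
    using G \<open>0 < \<epsilon>\<close> unfolding has_derivative_at_alt by (meson divide_pos_pos)
  obtain r where "0 < r" "ball p r \<subseteq> U"
    using \<open>open U\<close> \<open>p \<in> U\<close> open_contains_ball by blast
  define \<rho> where "\<rho> = min d r"
  have "0 < \<rho>" unfolding \<rho>_def using \<open>0 < d\<close> \<open>0 < r\<close> by simp
  then have "0 < \<rho> / (norm a + norm b + 1)"
    by (simp add: add_nonneg_pos)
  then show "\<forall>\<^sub>F s in at_right 0. dist ((\<theta> (p + s *\<^sub>R b + s *\<^sub>R a) - \<theta> (p + s *\<^sub>R a)
      - \<theta> (p + s *\<^sub>R b) + \<theta> p) / s\<^sup>2) (L b \<bullet> a) < \<epsilon>"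
  proof (rule eventually_mono[OF eventually_at_right_real])
    fix s assume "s \<in> {0<..<\<rho> / (norm a + norm b + 1)}"
    then have "0 < s" and "s * (norm a + norm b + 1) < \<rho>"
      by (auto simp: less_divide_eq add_nonneg_pos)
    then have s: "s * (norm a + norm b) < \<rho>"
      by (simp add: algebra_simps)
    have \<theta>\<rho>: "\<forall>q\<in>ball p \<rho>. (\<theta> has_derivative (\<lambda>v. G q \<bullet> v)) (at q)"
      using \<theta> \<open>ball p r \<subseteq> U\<close> unfolding \<rho>_def by auto
    have G\<rho>: "\<forall>y. norm (y - p) < \<rho> \<longrightarrow> norm (G y - G p - L (y - p)) \<le> \<epsilon> / K * norm (y - p)"
      using d unfolding \<rho>_def by simp
    have "0 \<le> \<epsilon> / K"
      using \<open>0 < \<epsilon>\<close> \<open>0 < K\<close> by simp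
    from second_difference_estimate[OF \<theta>\<rho> has_derivative_linear[OF G] G\<rho> this \<open>0 < s\<close> s]
    have "\<bar>\<theta> (p + s *\<^sub>R b + s *\<^sub>R a) - \<theta> (p + s *\<^sub>R a) - \<theta> (p + s *\<^sub>R b) + \<theta> p
        - s\<^sup>2 * (L b \<bullet> a)\<bar> \<le> \<epsilon> / K * s\<^sup>2 * ((norm b + 2 * norm a) * norm a)" .
    also have "\<dots> < \<epsilon> / K * s\<^sup>2 * K"
      using \<open>0 < \<epsilon>\<close> \<open>0 < K\<close> \<open>0 < s\<close> unfolding K_def by (intro mult_strict_left_mono) auto
    finally have "\<bar>\<theta> (p + s *\<^sub>R b + s *\<^sub>R a) - \<theta> (p + s *\<^sub>R a) - \<theta> (p + s *\<^sub>R b) + \<theta> p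
        - s\<^sup>2 * (L b \<bullet> a)\<bar> < \<epsilon> * s\<^sup>2"
      using \<open>0 < K\<close> by simp
    moreover have "X / s\<^sup>2 - Y = (X - s\<^sup>2 * Y) / s\<^sup>2" for X Y
      using \<open>0 < s\<close> by (simp add: field_simps)
    ultimately show "dist ((\<theta> (p + s *\<^sub>R b + s *\<^sub>R a) - \<theta> (p + s *\<^sub>R a)
        - \<theta> (p + s *\<^sub>R b) + \<theta> p) / s\<^sup>2) (L b \<bullet> a) < \<epsilon>"
      using \<open>0 < K\<close> \<open>0 < s\<close> by (simp add: dist_real_def abs_divide divide_less_eq)
  qed
qed

lemma hessian_symmetric:
  fixes \<theta> :: "'a::real_inner \<Rightarrow> real"
  assumes "open U" "p \<in> U" "\<forall>q\<in>U. (\<theta> has_derivative (\<lambda>v. G q \<bullet> v)) (at q)"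
    and "(G has_derivative L) (at p)"
  shows "L a \<bullet> b = L b \<bullet> a"
proof (rule tendsto_unique[OF trivial_limit_at_right_real])
  show "((\<lambda>s. (\<theta> (p + s *\<^sub>R b + s *\<^sub>R a) - \<theta> (p + s *\<^sub>R a) - \<theta> (p + s *\<^sub>R b) + \<theta> p) / s\<^sup>2)
      \<longlongrightarrow> L b \<bullet> a) (at_right 0)"
    by (rule second_difference_tendsto[OF assms])
  show "((\<lambda>s. (\<theta> (p + s *\<^sub>R b + s *\<^sub>R a) - \<theta> (p + s *\<^sub>R a) - \<theta> (p + s *\<^sub>R b) + \<theta> p) / s\<^sup>2)
      \<longlongrightarrow> L a \<bullet> b) (at_right 0)"
    using second_difference_tendsto[OF assms, where a = b and b = a] by (simp add: algebra_simps)
qed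

lemma has_derivative_partial_fst:
  assumes "(f has_derivative (\<lambda>w. g \<bullet> w)) (at (x, t))"
  shows "((\<lambda>y. f (y, t)) has_derivative (\<lambda>v. fst g \<bullet> v)) (at x)"
proof -
  have "((\<lambda>y. (y, t)) has_derivative (\<lambda>v. (v, 0))) (at x)"
    by (intro derivative_eq_intros) auto
  from has_derivative_compose[OF this assms] show ?thesis
    by (simp add: o_def inner_Pair_0)
qed

lemma has_real_derivative_partial_snd:
  assumes "(f has_derivative (\<lambda>w. g \<bullet> w)) (at (x, t))"
  shows "((\<lambda>\<tau>. f (x, \<tau>)) has_real_derivative snd g) (at t)"
proof -
  have "((\<lambda>\<tau>. (x, \<tau>)) has_derivative (\<lambda>s. (0, s))) (at t)"
    by (intro derivative_eq_intros) auto
  from has_derivative_compose[OF this assms] show ?thesis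
    by (simp add: o_def inner_Pair_0 has_field_derivative_def mult_commute_abs)
qed

lemma touching_gradient_hessian:
  fixes \<theta> h :: "(real^'n) \<times> real \<Rightarrow> real" and G :: "(real^'n) \<times> real \<Rightarrow> (real^'n) \<times> real"
    and Dh :: "real^'n \<Rightarrow> real^'n" and H :: "real^'n^'n"
  assumes U: "open U" "(x0, t0) \<in> U"
    and \<theta>: "\<forall>q\<in>U. (\<theta> has_derivative (\<lambda>v. G q \<bullet> v)) (at q)"
    and G: "(G has_derivative G') (at (x0, t0))"
    and below: "\<forall>q\<in>U. \<theta> q \<le> h q" and touch: "\<theta> (x0, t0) = h (x0, t0)"
    and V: "open V" "x0 \<in> V"
    and h_x: "\<forall>y\<in>V. ((\<lambda>y. h (y, t0)) has_derivative (\<lambda>v. Dh y \<bullet> v)) (at y)"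
    and Dh: "(Dh has_derivative (\<lambda>v. H *v v)) (at x0)"
  shows "fst (G (x0, t0)) = Dh x0"
    and "\<forall>u. u \<bullet> (matrix (\<lambda>v. fst (G' (v, 0))) *v u) \<le> u \<bullet> (H *v u)"
proof -
  define W where "W = (\<lambda>y. (y, t0)) -` U \<inter> V"
  have "open W" "x0 \<in> W"
    unfolding W_def using U V by (auto intro!: open_Int continuous_open_vimage continuous_intros)
  have "\<forall>y\<in>W. ((\<lambda>y. h (y, t0) - \<theta> (y, t0)) has_derivative (\<lambda>v. (Dh y - fst (G (y, t0))) \<bullet> v)) (at y)"
    using h_x \<theta> unfolding W_def inner_diff_left
    by (auto intro!: has_derivative_diff has_derivative_partial_fst)
  moreover have G_x: "((\<lambda>y. fst (G (y, t0))) has_derivative (\<lambda>v. fst (G' (v, 0)))) (at x0)"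
  proof -
    have "((\<lambda>y. (y, t0)) has_derivative (\<lambda>v. (v, 0))) (at x0)"
      by (intro derivative_eq_intros) auto
    from has_derivative_fst[OF has_derivative_compose[OF this G]] show ?thesis
      by (simp add: o_def)
  qed
  then have "((\<lambda>y. Dh y - fst (G (y, t0))) has_derivative (\<lambda>v. H *v v - fst (G' (v, 0)))) (at x0)"
    by (rule has_derivative_diff[OF Dh])
  moreover have "\<forall>y\<in>W. h (x0, t0) - \<theta> (x0, t0) \<le> h (y, t0) - \<theta> (y, t0)"
    using below touch unfolding W_def by force
  note local_min = local_min_gradient_hessian[OF \<open>open W\<close> \<open>x0 \<in> W\<close> calculation this]
  from local_min(1) show "fst (G (x0, t0)) = Dh x0"
    by simp
  from local_min(2) have hess: "0 \<le> (H *v u - fst (G' (u, 0))) \<bullet> u" for u .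
  show "\<forall>u. u \<bullet> (matrix (\<lambda>v. fst (G' (v, 0))) *v u) \<le> u \<bullet> (H *v u)"
    using hess has_derivative_linear[OF G_x]
    by (simp add: matrix_works inner_diff_left inner_diff_right inner_commute)
qed

lemma touching_time_derivative:
  fixes \<theta> h :: "(real^'n) \<times> real \<Rightarrow> real" and G :: "(real^'n) \<times> real \<Rightarrow> (real^'n) \<times> real"
  assumes U: "open U" "(x0, t0) \<in> U"
    and \<theta>: "(\<theta> has_derivative (\<lambda>v. G (x0, t0) \<bullet> v)) (at (x0, t0))"
    and below: "\<forall>q\<in>U. \<theta> q \<le> h q" and touch: "\<theta> (x0, t0) = h (x0, t0)"
    and h_t: "((\<lambda>\<tau>. h (x0, \<tau>)) has_real_derivative ht) (at t0)"
  shows "snd (G (x0, t0)) = ht"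
proof -
  have "((\<lambda>\<tau>. h (x0, \<tau>) - \<theta> (x0, \<tau>)) has_real_derivative ht - snd (G (x0, t0))) (at t0)"
    by (rule DERIV_diff[OF h_t has_real_derivative_partial_snd[OF \<theta>]])
  moreover obtain r where "0 < r" "ball (x0, t0) r \<subseteq> U"
    using U open_contains_ball by blast
  then have "\<forall>\<tau>. \<bar>t0 - \<tau>\<bar> < r \<longrightarrow> h (x0, t0) - \<theta> (x0, t0) \<le> h (x0, \<tau>) - \<theta> (x0, \<tau>)"
    using below touch by (force simp: dist_Pair_Pair dist_real_def)
  ultimately show ?thesis
    using DERIV_local_min \<open>0 < r\<close> by fastforce
qed

lemma touching_from_below:
  fixes \<theta> h :: "(real^'n) \<times> real \<Rightarrow> real" and G :: "(real^'n) \<times> real \<Rightarrow> (real^'n) \<times> real"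
    and Dh :: "real^'n \<Rightarrow> real^'n" and H :: "real^'n^'n"
  assumes U: "open U" "(x0, t0) \<in> U"
    and \<theta>: "\<forall>q\<in>U. (\<theta> has_derivative (\<lambda>v. G q \<bullet> v)) (at q)"
    and G: "(G has_derivative G') (at (x0, t0))"
    and below: "\<forall>q\<in>U. \<theta> q \<le> h q" and touch: "\<theta> (x0, t0) = h (x0, t0)"
    and V: "open V" "x0 \<in> V"
    and h_x: "\<forall>y\<in>V. ((\<lambda>y. h (y, t0)) has_derivative (\<lambda>v. Dh y \<bullet> v)) (at y)"
    and Dh: "(Dh has_derivative (\<lambda>v. H *v v)) (at x0)"
    and h_t: "((\<lambda>\<tau>. h (x0, \<tau>)) has_real_derivative ht) (at t0)"
  shows "fst (G (x0, t0)) = Dh x0" and "snd (G (x0, t0)) = ht"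
    and "\<forall>u. u \<bullet> (matrix (\<lambda>v. fst (G' (v, 0))) *v u) \<le> u \<bullet> (H *v u)"
    and "transpose (matrix (\<lambda>v. fst (G' (v, 0)))) = matrix (\<lambda>v. fst (G' (v, 0)))"
proof -
  show "fst (G (x0, t0)) = Dh x0" "\<forall>u. u \<bullet> (matrix (\<lambda>v. fst (G' (v, 0))) *v u) \<le> u \<bullet> (H *v u)"
    using touching_gradient_hessian[OF assms(1-10)] by blast+
  show "snd (G (x0, t0)) = ht"
    using touching_time_derivative[OF U _ below touch h_t] \<theta> U by blast
  have "G' (axis i 1, 0) \<bullet> (axis j 1, 0) = G' (axis j 1, 0) \<bullet> (axis i 1, 0)" for i j
    by (rule hessian_symmetric[OF U \<theta> G])
  then show "transpose (matrix (\<lambda>v. fst (G' (v, 0)))) = matrix (\<lambda>v. fst (G' (v, 0)))"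
    by (simp add: vec_eq_iff transpose_def matrix_def inner_Pair_0 inner_axis)
qed

lemma touching_zero_maximum:
  fixes \<theta> :: "(real^'n) \<times> real \<Rightarrow> real" and G :: "(real^'n) \<times> real \<Rightarrow> (real^'n) \<times> real"
  assumes U: "open U" "(x0, t0) \<in> U"
    and \<theta>: "\<forall>q\<in>U. (\<theta> has_derivative (\<lambda>v. G q \<bullet> v)) (at q)"
    and G: "(G has_derivative G') (at (x0, t0))"
    and "\<forall>q\<in>U. \<theta> q \<le> 0" "\<theta> (x0, t0) = 0" and "0 \<le> lam" "0 \<le> Lam"
  shows "fst (G (x0, t0)) = 0" "snd (G (x0, t0)) = 0"
    and "pucci_max lam Lam (matrix (\<lambda>v. fst (G' (v, 0)))) \<le> 0"
proof -
  note touching = touching_from_below[OF U \<theta> G, of "\<lambda>_. 0" UNIV "\<lambda>_. 0" 0 0]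
  show "fst (G (x0, t0)) = 0" "snd (G (x0, t0)) = 0"
    using touching assms(5,6) by auto
  show "pucci_max lam Lam (matrix (\<lambda>v. fst (G' (v, 0)))) \<le> 0"
    using pucci_max_le_if_quadratic_form_le[OF assms(7,8), of _ 0 0 0] touching assms(5,6) by simp
qed

section \<open>Sublinear growth of \<open>\<eta>\<close>\<close>

lemma ln_sq_le_ln_plus_const:
  fixes \<eta> :: "real \<Rightarrow> real"
  assumes ge1: "\<forall>t\<ge>0. \<eta> t \<ge> 1" and diff: "\<forall>\<^sub>F t in at_top. \<eta> differentiable (at t)"
    and lim: "((\<lambda>t. t * deriv \<eta> t / \<eta> t * ln (\<eta> t)) \<longlongrightarrow> 0) at_top"
  shows "\<exists>C. \<forall>\<^sub>F t in at_top. (ln (\<eta> t))\<^sup>2 \<le> C + ln t"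
proof -
  have "\<forall>\<^sub>F t in at_top. t * deriv \<eta> t / \<eta> t * ln (\<eta> t) < 1/2"
    using lim by (rule order_tendstoD) simp
  then obtain T where T: "\<And>t. t \<ge> T \<Longrightarrow> 1 \<le> t \<and> \<eta> differentiable (at t)
      \<and> t * deriv \<eta> t / \<eta> t * ln (\<eta> t) < 1/2"
    using diff eventually_ge_at_top[of 1] unfolding eventually_at_top_linorder
    by (metis (no_types, lifting) eventually_at_top_linorder eventually_conj)
  define F where "F t = (ln (\<eta> t))\<^sup>2 - ln t" for t
  \<comment> \<open>\<open>F' = (2 t \<eta>'/\<eta> ln \<eta> - 1) / t\<close>, which the hypothesis on \<open>\<eta>\<close> makes eventually negative.\<close>
  have "\<exists>y. (F has_real_derivative y) (at t) \<and> y \<le> 0" if "T \<le> t" for t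
  proof -
    have t: "1 \<le> t" "\<eta> differentiable (at t)" "t * deriv \<eta> t / \<eta> t * ln (\<eta> t) < 1/2"
      using T[OF that] by auto
    have "1 \<le> \<eta> t" using ge1 t(1) by simp
    have "(F has_real_derivative 2 * ln (\<eta> t) * (deriv \<eta> t / \<eta> t) - 1 / t) (at t)"
      unfolding F_def using t \<open>1 \<le> \<eta> t\<close>
      by (auto intro!: derivative_eq_intros simp: DERIV_deriv_iff_real_differentiable field_simps)
    moreover have "2 * ln (\<eta> t) * (deriv \<eta> t / \<eta> t) - 1 / t \<le> 0"
      using t by (simp add: field_simps)
    ultimately show ?thesis by blast
  qed
  then have "(ln (\<eta> t))\<^sup>2 \<le> F T + ln t" if "T \<le> t" for t
    using DERIV_nonpos_imp_nonincreasing[OF that] unfolding F_def by fastforce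
  then have "\<forall>\<^sub>F t in at_top. (ln (\<eta> t))\<^sup>2 \<le> F T + ln t"
    using eventually_at_top_linorder by blast
  then show ?thesis by blast
qed

lemma sublinear_growth:
  fixes \<eta> :: "real \<Rightarrow> real"
  assumes "\<forall>t\<ge>0. \<eta> t \<ge> 1" and "\<forall>\<^sub>F t in at_top. \<eta> differentiable (at t)"
    and "((\<lambda>t. t * deriv \<eta> t / \<eta> t * ln (\<eta> t)) \<longlongrightarrow> 0) at_top"
    and "0 < \<epsilon>"
  shows "\<forall>\<^sub>F t in at_top. \<eta> t \<le> \<epsilon> * t"
proof -
  obtain C where "\<forall>\<^sub>F t in at_top. (ln (\<eta> t))\<^sup>2 \<le> C + ln t"
    using ln_sq_le_ln_plus_const[OF assms(1-3)] by blast
  moreover have "\<forall>\<^sub>F t in at_top. sqrt (C + ln t) \<le> ln \<epsilon> + ln t"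
    using \<open>0 < \<epsilon>\<close> by real_asymp
  moreover have "\<forall>\<^sub>F t in at_top. 0 < (t::real)"
    by (rule eventually_gt_at_top)
  ultimately show ?thesis
  proof eventually_elim
    case (elim t)
    have "0 < \<eta> t" using assms(1) elim(3) by (meson less_eq_real_def less_le_trans zero_less_one)
    have "ln (\<eta> t) \<le> sqrt (C + ln t)"
      using real_sqrt_le_mono[OF elim(1)] by simp
    also have "\<dots> \<le> ln (\<epsilon> * t)"
      using elim(2,3) \<open>0 < \<epsilon>\<close> by (simp add: ln_mult)
    finally show ?case
      using \<open>0 < \<eta> t\<close> \<open>0 < \<epsilon>\<close> elim(3) by simp
  qed
qed

lemma small_coefficient:
  fixes eta :: "real \<Rightarrow> real"
  assumes "\<forall>t\<ge>0. eta t \<ge> 1" and "\<forall>\<^sub>F t in at_top. eta differentiable (at t)"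
    and "((\<lambda>t. t * deriv eta t / eta t * ln (eta t)) \<longlongrightarrow> 0) at_top"
    and "0 < Lam0" "0 < \<kappa>"
  shows "\<exists>r0>0. \<forall>r. 0 < r \<and> r \<le> r0 \<longrightarrow> 0 \<le> Lam0 * r * eta (1/r) \<and> Lam0 * r * eta (1/r) \<le> \<kappa>"
proof -
  obtain T where T: "\<forall>t\<ge>T. eta t \<le> \<kappa> / Lam0 * t"
    using sublinear_growth[OF assms(1-3), of "\<kappa> / Lam0"] assms(4,5)
    unfolding eventually_at_top_linorder by auto
  define M where "M = max T 1"
  have "0 < M" "T \<le> M" unfolding M_def by auto
  have "0 \<le> Lam0 * r * eta (1/r) \<and> Lam0 * r * eta (1/r) \<le> \<kappa>" if "0 < r" "r \<le> 1 / M" for r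
  proof -
    have "M \<le> 1/r"
      using that \<open>0 < M\<close> by (simp add: field_simps)
    then have "T \<le> 1/r"
      using \<open>T \<le> M\<close> by simp
    then have "eta (1/r) \<le> \<kappa> / Lam0 * (1/r)"
      using T by blast
    then have "Lam0 * r * eta (1/r) \<le> Lam0 * r * (\<kappa> / Lam0 * (1/r))"
      using assms(4) that(1) by (intro mult_left_mono) auto
    moreover have "1 \<le> eta (1/r)"
      using assms(1) that(1) by simp
    ultimately show ?thesis
      using assms(4) that(1) by simp
  qed
  moreover have "0 < 1 / M" using \<open>0 < M\<close> by simp
  ultimately show ?thesis by blast
qed

section \<open>The barrier\<close>

lemma lipschitz_on_if_continuous_gradient:
  fixes f :: "'a::{real_inner, perfect_space} \<Rightarrow> real"
  assumes "compact S" "convex S"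
    and "\<forall>p\<in>S. (f has_derivative (\<lambda>w. g p \<bullet> w)) (at p)" and "continuous_on S g"
  shows "\<exists>L. L-lipschitz_on S f"
proof -
  obtain B where B: "\<forall>p\<in>S. norm (g p) \<le> B"
    using compact_imp_bounded[OF compact_continuous_image[OF assms(4,1)]]
    unfolding bounded_iff by auto
  have "(max B 0)-lipschitz_on S f"
  proof (rule bounded_derivative_imp_lipschitz[OF _ \<open>convex S\<close>])
    show "(f has_derivative (\<lambda>w. g p \<bullet> w)) (at p within S)" if "p \<in> S" for p
      using assms(3) that by (simp add: has_derivative_at_withinI)
    show "onorm (\<lambda>w. g p \<bullet> w) \<le> max B 0" if "p \<in> S" for p
    proof (rule onorm_le)
      fix w
      have "norm (g p \<bullet> w) \<le> norm (g p) * norm w"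
        by (simp add: Cauchy_Schwarz_ineq2)
      also have "\<dots> \<le> max B 0 * norm w"
        using B that by (intro mult_right_mono) auto
      finally show "norm (g p \<bullet> w) \<le> max B 0 * norm w" .
    qed
  qed simp
  then show ?thesis by blast
qed

definition pos_sq :: "real \<Rightarrow> real" where
  "pos_sq y = (max 0 y)\<^sup>2"

lemma pos_sq_has_real_derivative: "(pos_sq has_real_derivative 2 * max 0 y) (at y)"
proof (cases y "0::real" rule: linorder_cases)
  case less
  have "((\<lambda>z. 0) has_real_derivative 2 * max 0 y) (at y)"
    using less by simp
  then show ?thesis
    by (rule has_field_derivative_transform_within_open[of _ _ _ "{..<0}"])
      (use less in \<open>auto simp: pos_sq_def\<close>)
next
  case equal
  have "\<forall>\<^sub>F z in at 0. (pos_sq z - pos_sq 0) / (z - 0) = max 0 z"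
    unfolding eventually_at_filter pos_sq_def by (auto simp: max_def power2_eq_square)
  moreover have "((\<lambda>z. max 0 z) \<longlongrightarrow> 0) (at (0::real))"
    by (rule tendsto_eq_intros) (auto intro: tendsto_eq_intros)
  ultimately show ?thesis
    unfolding has_field_derivative_iff using equal by (simp add: tendsto_cong)
next
  case greater
  have "((\<lambda>z. z\<^sup>2) has_real_derivative 2 * max 0 y) (at y)"
    using greater by (auto intro!: derivative_eq_intros)
  then show ?thesis
    by (rule has_field_derivative_transform_within_open[of _ _ _ "{0<..}"])
      (use greater in \<open>auto simp: pos_sq_def\<close>)
qed

definition barrier_amp :: "real \<Rightarrow> real \<Rightarrow> real \<Rightarrow> real" where
  "barrier_amp B a t = B * exp (- a * (t + 1))"

definition barrier_rad :: "real \<Rightarrow> real \<Rightarrow> real" where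
  "barrier_rad k t = 9/10 * (1 - exp (- k * (t + 1)))"

definition barrier_rad' :: "real \<Rightarrow> real \<Rightarrow> real" where
  "barrier_rad' k t = 9/10 * k * exp (- k * (t + 1))"

definition barrier :: "real \<Rightarrow> real \<Rightarrow> real \<Rightarrow> (real^'n) \<times> real \<Rightarrow> real" where
  "barrier B a k p =
     - barrier_amp B a (snd p) * pos_sq ((barrier_rad k (snd p))\<^sup>2 - fst p \<bullet> fst p)"

definition barrier_grad :: "real \<Rightarrow> real \<Rightarrow> real \<Rightarrow> (real^'n) \<times> real \<Rightarrow> (real^'n) \<times> real" where
  "barrier_grad B a k p =
     (let A = barrier_amp B a (snd p); \<rho> = barrier_rad k (snd p); q = \<rho>\<^sup>2 - fst p \<bullet> fst p
      in ((4 * A * max 0 q) *\<^sub>R fst p, A * (a * pos_sq q - 4 * max 0 q * \<rho> * barrier_rad' k (snd p))))"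

lemma barrier_has_derivative:
  "(barrier B a k has_derivative (\<lambda>w. barrier_grad B a k p \<bullet> w)) (at p)"
proof -
  have amp: "(barrier_amp B a has_real_derivative - a * barrier_amp B a t) (at t)" for t
    unfolding barrier_amp_def by (auto intro!: derivative_eq_intros)
  have rad: "(barrier_rad k has_real_derivative barrier_rad' k t) (at t)" for t
    unfolding barrier_rad_def barrier_rad'_def by (auto intro!: derivative_eq_intros)
  show ?thesis
    unfolding barrier_def[abs_def] barrier_grad_def Let_def
    by (rule has_derivative_eq_rhs,
        (rule derivative_eq_intros DERIV_compose_FDERIV[OF amp] DERIV_compose_FDERIV[OF rad]
          DERIV_compose_FDERIV[OF pos_sq_has_real_derivative] | simp)+)
      (auto simp: fun_eq_iff inner_prod_def inner_commute algebra_simps)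
qed

lemma barrier_amp_nonneg: "0 \<le> B \<Longrightarrow> 0 \<le> barrier_amp B a t"
  unfolding barrier_amp_def by simp

lemma barrier_amp_le: "0 \<le> a \<Longrightarrow> 0 \<le> B \<Longrightarrow> -1 \<le> t \<Longrightarrow> barrier_amp B a t \<le> B"
  unfolding barrier_amp_def by (simp add: mult_left_le)

lemma barrier_amp_ge: "0 \<le> a \<Longrightarrow> 0 \<le> B \<Longrightarrow> t \<le> 0 \<Longrightarrow> B * exp (- a) \<le> barrier_amp B a t"
  unfolding barrier_amp_def by (simp add: mult_left_mono mult_left_le)

lemma barrier_rad_bounds: "0 \<le> k \<Longrightarrow> -1 \<le> t \<Longrightarrow> 0 \<le> barrier_rad k t \<and> barrier_rad k t \<le> 9/10"
  unfolding barrier_rad_def by simp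

lemma barrier_rad'_bounds:
  assumes "0 \<le> k" "-1 \<le> t"
  shows "0 \<le> barrier_rad' k t \<and> barrier_rad' k t \<le> k"
proof -
  have "exp (- k * (t + 1)) \<le> 1"
    using assms by simp
  then show ?thesis
    unfolding barrier_rad'_def using assms mult_left_le[of "exp (- k * (t + 1))" "9/10 * k"] by simp
qed

lemma barrier_rad_le: "barrier_rad k t \<le> 9/10 * (k * (t + 1))"
  using exp_ge_add_one_self[of "- k * (t + 1)"] unfolding barrier_rad_def by simp

lemma barrier_rad_ge:
  assumes "0 \<le> k * (t + 1)"
  shows "9/10 * (k * (t + 1) / (1 + k * (t + 1))) \<le> barrier_rad k t"
proof -
  define y where "y = k * (t + 1)"
  have "exp (- y) = inverse (exp y)"
    by (simp add: exp_minus)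
  also have "\<dots> \<le> inverse (1 + y)"
    using assms exp_ge_add_one_self[of y] unfolding y_def by (intro le_imp_inverse_le) auto
  finally have "y / (1 + y) \<le> 1 - exp (- y)"
    using assms unfolding y_def by (simp add: field_simps)
  then have "9/10 * (y / (1 + y)) \<le> 9/10 * (1 - exp (- y))"
    by (rule mult_left_mono) simp
  then show ?thesis
    unfolding barrier_rad_def y_def by simp
qed

lemma barrier_rad_ge_late:
  assumes "0 < c" "c \<le> 1" "c / 4 \<le> k * (t + 1)"
  shows "9 * c / 50 \<le> barrier_rad k t"
proof -
  define y where "y = k * (t + 1)"
  have "c * y \<le> y"
    using assms unfolding y_def by (intro mult_left_le_one_le) auto
  then have "c * (1 + y) \<le> 5 * y"
    using assms(3) unfolding y_def by (simp add: algebra_simps)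
  then have "c / 5 \<le> y / (1 + y)"
    using assms unfolding y_def by (simp add: field_simps)
  then have "9/10 * (c / 5) \<le> 9/10 * (y / (1 + y))"
    by (rule mult_left_mono) simp
  also have "\<dots> \<le> barrier_rad k t"
    using barrier_rad_ge[of k t] assms unfolding y_def by simp
  finally show ?thesis by simp
qed

lemma inside_barrier_norm_le:
  assumes "0 \<le> k" "-1 \<le> t" "x \<bullet> x < (barrier_rad k t)\<^sup>2"
  shows "norm x \<le> 9/10 * (k * (t + 1))"
proof -
  have "0 \<le> barrier_rad k t"
    using barrier_rad_bounds[OF assms(1,2)] by simp
  then have "(norm x)\<^sup>2 \<le> (barrier_rad k t)\<^sup>2"
    using assms(3) by (simp add: power2_norm_eq_inner)
  then have "norm x \<le> barrier_rad k t"
    using \<open>0 \<le> barrier_rad k t\<close> by (rule power2_le_imp_le)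
  then show ?thesis
    using barrier_rad_le[of k t] by linarith
qed

lemma barrier_nonpos: "0 \<le> B \<Longrightarrow> barrier B a k p \<le> 0"
  unfolding barrier_def pos_sq_def by (simp add: barrier_amp_nonneg)

lemma barrier_neg_imp_inside: "barrier B a k (x, t) < 0 \<Longrightarrow> x \<bullet> x < (barrier_rad k t)\<^sup>2"
  unfolding barrier_def pos_sq_def by (cases "x \<bullet> x < (barrier_rad k t)\<^sup>2") auto

lemma linf_le_norm: "linf x \<le> norm (x::real^'n)"
proof -
  have "linf x \<in> range (\<lambda>i. \<bar>x $ i\<bar>)"
    unfolding linf_def by (rule Max_in) auto
  then show ?thesis
    using component_le_norm_cart by auto
qed

lemma norm_le_card_mult_linf: "norm x \<le> real CARD('n) * linf (x::real^'n)"
proof -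
  have "norm x \<le> (\<Sum>i\<in>UNIV. \<bar>x $ i\<bar>)"
    by (rule norm_le_l1_cart)
  also have "\<dots> \<le> (\<Sum>i\<in>(UNIV::'n set). linf x)"
    unfolding linf_def by (intro sum_mono Max_ge) auto
  finally show ?thesis by simp
qed

lemma inner_self_le_card_mult:
  fixes x :: "real^'n"
  assumes "\<forall>i. \<bar>x $ i\<bar> \<le> d"
  shows "x \<bullet> x \<le> real CARD('n) * d\<^sup>2"
proof -
  have "x \<bullet> x = (\<Sum>i\<in>UNIV. \<bar>x $ i\<bar>\<^sup>2)"
    by (simp add: inner_vec_def power2_eq_square)
  also have "\<dots> \<le> (\<Sum>i\<in>(UNIV::'n set). d\<^sup>2)"
    using assms by (intro sum_mono power_mono) auto
  finally show ?thesis by simp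
qed

lemma barrier_eq_0_on_parab_bdry:
  assumes "0 \<le> k" and "p \<in> parab_bdry"
  shows "barrier B a k p = 0"
proof -
  obtain x t where p: "p = (x, t)" by fastforce
  have "(barrier_rad k t)\<^sup>2 \<le> x \<bullet> x"
  proof (cases "t = -1")
    case False
    then have "linf x = 1" "-1 \<le> t"
      using assms(2) unfolding p parab_bdry_def by auto
    then have "1 \<le> x \<bullet> x"
      using linf_le_norm[of x] by (simp add: power2_norm_eq_inner[symmetric] one_le_power)
    moreover have "(barrier_rad k t)\<^sup>2 \<le> 1"
      using barrier_rad_bounds[OF \<open>0 \<le> k\<close> \<open>-1 \<le> t\<close>] by (simp add: power_le_one)
    ultimately show ?thesis by linarith
  qed (simp add: barrier_rad_def)
  then show ?thesis
    unfolding barrier_def pos_sq_def p by simp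
qed

lemma barrier_le_neg_two:
  assumes "5 \<le> barrier_amp B a t" and "100 \<le> k * (t + 1)" and "x \<bullet> x \<le> 9/100"
  shows "barrier B a k (x, t) \<le> -2"
proof -
  have "9/10 * (100 / 101) \<le> 9/10 * (k * (t + 1) / (1 + k * (t + 1)))"
    using assms(2) by (simp add: field_simps)
  also have "\<dots> \<le> barrier_rad k t"
    using assms(2) by (intro barrier_rad_ge) simp
  finally have "(9/10 * (100 / 101))\<^sup>2 \<le> (barrier_rad k t)\<^sup>2"
    by (rule power_mono) simp
  then have "7/10 \<le> (barrier_rad k t)\<^sup>2 - x \<bullet> x"
    using assms(3) by (simp add: power2_eq_square)
  then have "(7/10)\<^sup>2 \<le> pos_sq ((barrier_rad k t)\<^sup>2 - x \<bullet> x)"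
    unfolding pos_sq_def by (intro power_mono) auto
  with assms(1) have "5 * (7/10)\<^sup>2 \<le> barrier_amp B a t * pos_sq ((barrier_rad k t)\<^sup>2 - x \<bullet> x)"
    by (intro mult_mono) auto
  then show ?thesis
    unfolding barrier_def by (simp add: power2_eq_square)
qed

lemma barrier_le_on_K3:
  assumes "0 \<le> a" and B: "5 \<le> B * exp (- a)" and k: "100 \<le> k * (cn TYPE('n))\<^sup>2"
    and "p \<in> K3"
  shows "barrier B a k (p :: (real^'n) \<times> real) \<le> -2"
proof -
  obtain x t where p: "p = (x, t)" by fastforce
  define c where "c = cn TYPE('n)"
  have c: "0 < c" "real CARD('n) * c = 1/10" "c \<le> 1/10"
    unfolding c_def cn_def by (auto simp: field_simps)
  have x: "\<forall>i. - 3 * c < x $ i \<and> x $ i < 3 * c" and t: "-1 + c\<^sup>2 < t" "t < 0"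
    using \<open>p \<in> K3\<close> unfolding p K3_def c_def by auto
  have "\<forall>i. \<bar>x $ i\<bar> \<le> 3 * c"
  proof
    fix i show "\<bar>x $ i\<bar> \<le> 3 * c"
      using x[rule_format, of i] by (simp add: abs_le_iff)
  qed
  then have "x \<bullet> x \<le> real CARD('n) * (3 * c)\<^sup>2"
    by (rule inner_self_le_card_mult)
  also have "\<dots> = 9/10 * c"
    using c by (simp add: power2_eq_square algebra_simps)
  also have "\<dots> \<le> 9/100"
    using c by simp
  finally have "x \<bullet> x \<le> 9/100" .
  moreover have "0 < k * c\<^sup>2"
    using k unfolding c_def by linarith
  then have "k * c\<^sup>2 \<le> k * (t + 1)"
    using t by (intro mult_left_mono) (auto simp: zero_less_mult_iff)
  then have "100 \<le> k * (t + 1)"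
    using k unfolding c_def by linarith
  moreover have "0 < B * exp (- a)"
    using B by linarith
  then have "5 \<le> barrier_amp B a t"
    using B barrier_amp_ge[OF \<open>0 \<le> a\<close>, of B t] t by (simp add: zero_less_mult_iff)
  ultimately show ?thesis
    unfolding p by (intro barrier_le_neg_two)
qed

lemma barrier_grad_continuous: "continuous_on S (barrier_grad B a k)"
  unfolding barrier_grad_def barrier_amp_def barrier_rad_def barrier_rad'_def pos_sq_def Let_def
  by (intro continuous_intros)

lemma barrier_lipschitz: "\<exists>L. L-lipschitz_on (Q1 \<union> parab_bdry) (barrier B a k :: (real^'n) \<times> real \<Rightarrow> real)"
proof -
  let ?S = "cball (0::real^'n) (real CARD('n)) \<times> {-1..0::real}"
  have "\<exists>L. L-lipschitz_on ?S (barrier B a k)"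
    by (rule lipschitz_on_if_continuous_gradient[OF _ _ _ barrier_grad_continuous])
      (auto intro!: compact_Times convex_Times barrier_has_derivative)
  moreover have "Q1 \<union> parab_bdry \<subseteq> ?S"
  proof
    fix p :: "(real^'n) \<times> real" assume "p \<in> Q1 \<union> parab_bdry"
    then obtain x t where p: "p = (x, t)" "linf x \<le> 1" "-1 \<le> t" "t \<le> 0"
      unfolding Q1_def parab_bdry_def by auto
    have "norm x \<le> real CARD('n) * linf x"
      by (rule norm_le_card_mult_linf)
    also have "\<dots> \<le> real CARD('n)"
      using p(2) by (simp add: mult_left_le)
    finally show "p \<in> ?S"
      using p by simp
  qed
  ultimately show ?thesis
    using lipschitz_on_subset by blast
qed

definition barrier_hessian :: "real \<Rightarrow> real \<Rightarrow> real^'n \<Rightarrow> real^'n^'n" where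
  "barrier_hessian b q x = (\<chi> i j. 4 * b * ((if i = j then q else 0) - 2 * x $ i * x $ j))"

lemma barrier_hessian_mult:
  "barrier_hessian b q x *v v = (4 * b * q) *\<^sub>R v - (8 * b * (x \<bullet> v)) *\<^sub>R x"
proof -
  have "(\<Sum>j\<in>UNIV. (if i = j then q else 0) * v $ j) = q * v $ i" for i
    by (subst sum.cong[OF refl, of _ _ "\<lambda>j. if i = j then q * v $ j else 0"]) auto
  moreover have "(\<Sum>j\<in>UNIV. 4 * b * ((if i = j then q else 0) - 2 * x $ i * x $ j) * v $ j)
     = 4 * b * (\<Sum>j\<in>UNIV. (if i = j then q else 0) * v $ j) - 8 * b * x $ i * (x \<bullet> v)" for i
    by (simp add: inner_vec_def algebra_simps sum_subtractf sum_distrib_left)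
  ultimately show ?thesis
    by (simp add: barrier_hessian_def matrix_vector_mult_def vec_eq_iff algebra_simps)
qed

lemma barrier_hessian_quadratic_form:
  "u \<bullet> (barrier_hessian b q x *v u) = 4 * b * q * (u \<bullet> u) - 8 * b * (x \<bullet> u)\<^sup>2"
  unfolding barrier_hessian_mult
  by (simp add: inner_diff_right power2_eq_square inner_commute algebra_simps)

lemma spatial_gradient_has_derivative:
  "((\<lambda>y. (4 * b * (r - y \<bullet> y)) *\<^sub>R y) has_derivative (\<lambda>v. barrier_hessian b (r - x \<bullet> x) x *v v)) (at x)"
  by (rule has_derivative_eq_rhs, (rule derivative_eq_intros | simp)+)
    (auto simp: fun_eq_iff barrier_hessian_mult inner_commute algebra_simps)

lemma barrier_spatial_gradient:
  assumes "y \<bullet> y < (barrier_rad k t)\<^sup>2"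
  shows "fst (barrier_grad B a k (y, t))
    = (4 * barrier_amp B a t * ((barrier_rad k t)\<^sup>2 - y \<bullet> y)) *\<^sub>R y"
  using assms by (simp add: barrier_grad_def Let_def)

lemma barrier_time_gradient:
  assumes "x \<bullet> x < (barrier_rad k t)\<^sup>2"
  shows "snd (barrier_grad B a k (x, t)) = barrier_amp B a t * ((barrier_rad k t)\<^sup>2 - x \<bullet> x)
      * (a * ((barrier_rad k t)\<^sup>2 - x \<bullet> x) - 4 * barrier_rad k t * barrier_rad' k t)"
  using assms by (simp add: barrier_grad_def pos_sq_def Let_def power2_eq_square algebra_simps)

lemma barrier_C2x: "C2x_on {p \<in> Q1. barrier B a k p < 0} (barrier B a k :: (real^'n) \<times> real \<Rightarrow> real)"
  unfolding C2x_on_def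
proof (intro exI conjI)
  let ?q = "\<lambda>p::(real^'n) \<times> real. (barrier_rad k (snd p))\<^sup>2 - fst p \<bullet> fst p"
  let ?Dh = "\<lambda>p. (4 * barrier_amp B a (snd p) * ?q p) *\<^sub>R fst p"
  let ?D2h = "\<lambda>p. barrier_hessian (barrier_amp B a (snd p)) (?q p) (fst p)"
  show "continuous_on S ?Dh" for S
    unfolding barrier_amp_def barrier_rad_def by (intro continuous_intros)
  show "continuous_on S ?D2h" for S
    unfolding barrier_hessian_def barrier_amp_def barrier_rad_def
  proof (intro continuous_on_vec_lambda)
    fix i j :: 'n
    show "continuous_on S (\<lambda>p. 4 * (B * exp (- a * (snd p + 1))) *
        ((if i = j then (9/10 * (1 - exp (- k * (snd p + 1))))\<^sup>2 - fst p \<bullet> fst p else 0)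
          - 2 * fst p $ i * fst p $ j))"
      by (cases "i = j") (auto intro!: continuous_intros)
  qed
  show "\<forall>(x, t)\<in>{p \<in> Q1. barrier B a k p < 0}.
      ((\<lambda>y. barrier B a k (y, t)) has_derivative (\<lambda>v. ?Dh (x, t) \<bullet> v)) (at x) \<and>
      ((\<lambda>y. ?Dh (y, t)) has_derivative (\<lambda>v. ?D2h (x, t) *v v)) (at x)"
  proof clarify
    fix x :: "real^'n" and t assume "barrier B a k (x, t) < 0"
    then have inside: "x \<bullet> x < (barrier_rad k t)\<^sup>2"
      by (rule barrier_neg_imp_inside)
    have "((\<lambda>y. barrier B a k (y, t)) has_derivative (\<lambda>v. fst (barrier_grad B a k (x, t)) \<bullet> v)) (at x)"
      by (rule has_derivative_partial_fst[OF barrier_has_derivative])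
    then show "((\<lambda>y. barrier B a k (y, t)) has_derivative (\<lambda>v. ?Dh (x, t) \<bullet> v)) (at x) \<and>
        ((\<lambda>y. ?Dh (y, t)) has_derivative (\<lambda>v. ?D2h (x, t) *v v)) (at x)"
      using spatial_gradient_has_derivative[of "barrier_amp B a t" "(barrier_rad k t)\<^sup>2"]
      by (simp add: barrier_spatial_gradient[OF inside])
  qed
qed

section \<open>The viscosity inequality\<close>

lemma drift_dominates_interior:
  fixes C r \<rho> q s a :: real
  assumes "0 \<le> C" "0 < r" "r \<le> \<rho>" "0 < q" "q + s = \<rho>\<^sup>2" "2 * s \<le> q"
    and a: "(C + 1) / (2 * r\<^sup>2 / 3) \<le> a"
  shows "C * q - a * q\<^sup>2 \<le> - (2 * r\<^sup>2 / 3)"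
proof -
  define a1 where "a1 = (C + 1) / (2 * r\<^sup>2 / 3)"
  have "r\<^sup>2 \<le> \<rho>\<^sup>2"
    using assms(2,3) by (simp add: power_mono)
  then have "2 * r\<^sup>2 / 3 \<le> q"
    using assms(5,6) by linarith
  then have "a1 * (2 * r\<^sup>2 / 3) \<le> a1 * q"
    unfolding a1_def using assms(1,2) by (intro mult_left_mono) auto
  moreover have "a1 * (2 * r\<^sup>2 / 3) = C + 1"
    unfolding a1_def using assms(2) by simp
  ultimately have "C + 1 \<le> a1 * q" by simp
  have "a1 * q\<^sup>2 \<le> a * q\<^sup>2"
    using a unfolding a1_def[symmetric] by (simp add: mult_right_mono)
  then have "C * q - a * q\<^sup>2 \<le> q * (C - a1 * q)"
    by (simp add: power2_eq_square algebra_simps)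
  also have "\<dots> \<le> q * (- 1)"
    using \<open>C + 1 \<le> a1 * q\<close> \<open>0 < q\<close> by (intro mult_left_mono) auto
  finally show ?thesis
    using \<open>2 * r\<^sup>2 / 3 \<le> q\<close> by simp
qed

lemma drift_dominates_near_boundary:
  fixes lam C r \<rho> q s a :: real
  assumes "0 < lam" "0 < r" "r \<le> \<rho>" "q + s = \<rho>\<^sup>2"
    and a: "(C + 12 * lam)\<^sup>2 / (16 * lam * r\<^sup>2) \<le> a"
  shows "C * q + 4 * lam * (q - 2 * s) - a * q\<^sup>2 \<le> - (4 * lam * r\<^sup>2)"
proof -
  define L where "L = lam * r\<^sup>2"
  have "0 < L" unfolding L_def using assms(1,2) by simp
  have "4 * lam * (q - 2 * s) = 12 * lam * q - 8 * (lam * \<rho>\<^sup>2)"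
    by (simp add: assms(4)[symmetric] algebra_simps)
  moreover have "L \<le> lam * \<rho>\<^sup>2"
    unfolding L_def using assms(1-3) by (simp add: power_mono)
  moreover have "(C + 12 * lam) * q - (C + 12 * lam)\<^sup>2 / (16 * L) * q\<^sup>2 \<le> 4 * L"
  proof -
    have "(C + 12 * lam)\<^sup>2 / (16 * L) * q\<^sup>2 - (C + 12 * lam) * q + 4 * L
        = ((C + 12 * lam) * q - 8 * L)\<^sup>2 / (16 * L)"
      using \<open>0 < L\<close> by (simp add: field_simps power2_eq_square)
    moreover have "0 \<le> ((C + 12 * lam) * q - 8 * L)\<^sup>2 / (16 * L)"
      using \<open>0 < L\<close> by simp
    ultimately show ?thesis by linarith
  qed
  moreover have "(C + 12 * lam)\<^sup>2 / (16 * L) * q\<^sup>2 \<le> a * q\<^sup>2"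
    using mult_right_mono[OF a zero_le_power2[of q]] by (simp add: L_def mult.assoc)
  ultimately show ?thesis
    unfolding L_def by (simp add: algebra_simps)
qed

lemma drift_dominates:
  fixes lam C r \<rho> q s a :: real
  assumes "0 < lam" "0 \<le> C" "0 < r" "r \<le> \<rho>" "0 < q" "q + s = \<rho>\<^sup>2"
    and a: "(C + 1) / (2 * r\<^sup>2 / 3) + (C + 12 * lam)\<^sup>2 / (16 * lam * r\<^sup>2) \<le> a"
  shows "C * q + 4 * lam * min 0 (q - 2 * s) - a * q\<^sup>2 \<le> - min (2 * r\<^sup>2 / 3) (4 * lam * r\<^sup>2)"
proof (cases "2 * s \<le> q")
  case True
  have "0 \<le> (C + 12 * lam)\<^sup>2 / (16 * lam * r\<^sup>2)"
    using assms(1) by simp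
  then have "(C + 1) / (2 * r\<^sup>2 / 3) \<le> a"
    using a by linarith
  from drift_dominates_interior[OF assms(2-6) True this]
  have "C * q - a * q\<^sup>2 \<le> - (2 * r\<^sup>2 / 3)" .
  moreover have "min (2 * r\<^sup>2 / 3) (4 * lam * r\<^sup>2) \<le> 2 * r\<^sup>2 / 3"
    by simp
  moreover have "min 0 (q - 2 * s) = 0"
    using True by simp
  ultimately show ?thesis by simp
next
  case False
  have "0 \<le> (C + 1) / (2 * r\<^sup>2 / 3)"
    using assms(2,3) by simp
  then have "(C + 12 * lam)\<^sup>2 / (16 * lam * r\<^sup>2) \<le> a"
    using a by linarith
  from drift_dominates_near_boundary[OF assms(1,3,4,6) this]
  have "C * q + 4 * lam * (q - 2 * s) - a * q\<^sup>2 \<le> - (4 * lam * r\<^sup>2)" .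
  moreover have "min (2 * r\<^sup>2 / 3) (4 * lam * r\<^sup>2) \<le> 4 * lam * r\<^sup>2"
    by simp
  moreover have "min 0 (q - 2 * s) = q - 2 * s"
    using False by simp
  ultimately show ?thesis by simp
qed

locale barrier_setup =
  fixes lam Lam :: real and phi :: "real \<Rightarrow> real" and B a k r T \<kappa> :: real
    and g :: "(real^'n) \<times> real \<Rightarrow> real"
  assumes lam_pos: "0 < lam" and Lam_nonneg: "0 \<le> Lam"
    and phi_mono: "mono_on {0..} phi" and phi_0: "phi 0 = 0"
    and k_nonneg: "0 \<le> k" and B_pos: "0 < B" and \<kappa>_nonneg: "0 \<le> \<kappa>" and r_pos: "0 < r"
    and a_large: "(4 * (Lam * CARD('n) + k) + 1) / (2 * r\<^sup>2 / 3)
      + (4 * (Lam * CARD('n) + k) + 12 * lam)\<^sup>2 / (16 * lam * r\<^sup>2) \<le> a"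
    and \<kappa>_small: "\<kappa> * phi (4 * B) \<le> B * exp (- a) * min (2 * r\<^sup>2 / 3) (4 * lam * r\<^sup>2)"
    and rad_late: "\<forall>t>T. r \<le> barrier_rad k t"
    and g_nonneg: "\<forall>p. 0 \<le> g p"
    and g_early: "\<forall>x t. -1 < t \<and> t \<le> T \<and> x \<bullet> x < (barrier_rad k t)\<^sup>2
      \<longrightarrow> 4 * B * (Lam * CARD('n) + k) + \<kappa> * phi (4 * B) \<le> g (x, t)"
begin

lemma a_nonneg: "0 \<le> a"
proof -
  have "0 \<le> (4 * (Lam * CARD('n) + k) + 1) / (2 * r\<^sup>2 / 3)"
    using Lam_nonneg k_nonneg r_pos by (intro divide_nonneg_pos) auto
  moreover have "0 \<le> (4 * (Lam * CARD('n) + k) + 12 * lam)\<^sup>2 / (16 * lam * r\<^sup>2)"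
    using lam_pos by simp
  ultimately show ?thesis
    using a_large by linarith
qed

lemma drift_bound_early:
  assumes "0 \<le> b" "b \<le> B" "0 < q" "q \<le> 1"
  shows "b * (4 * (Lam * CARD('n) + k)) * q + lam * min 0 (4 * b * q - 8 * b * s) - a * b * q\<^sup>2
    \<le> 4 * B * (Lam * CARD('n) + k)"
proof -
  have "b * q \<le> B * 1"
    using assms by (intro mult_mono) auto
  then have "b * q * (4 * (Lam * CARD('n) + k)) \<le> B * (4 * (Lam * CARD('n) + k))"
    using Lam_nonneg k_nonneg by (intro mult_right_mono) auto
  moreover have "0 \<le> a * b * q\<^sup>2"
    using a_nonneg assms(1) by simp
  moreover have "lam * min 0 (4 * b * q - 8 * b * s) \<le> 0"
    using lam_pos by (simp add: mult_nonneg_nonpos)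
  ultimately show ?thesis
    by (simp add: algebra_simps)
qed

lemma drift_bound_late:
  assumes "B * exp (- a) \<le> b" "r \<le> \<rho>" "0 < q" "q + s = \<rho>\<^sup>2"
  shows "b * (4 * (Lam * CARD('n) + k)) * q + lam * min 0 (4 * b * q - 8 * b * s) - a * b * q\<^sup>2
    + \<kappa> * phi (4 * B) \<le> 0"
proof -
  define m where "m = min (2 * r\<^sup>2 / 3) (4 * lam * r\<^sup>2)"
  have "0 < B * exp (- a)"
    using B_pos by simp
  then have "0 \<le> b"
    using assms(1) by linarith
  have "4 * (Lam * CARD('n) + k) * q + 4 * lam * min 0 (q - 2 * s) - a * q\<^sup>2 \<le> - m"
    unfolding m_def using lam_pos Lam_nonneg k_nonneg r_pos assms(2-4) a_large
    by (intro drift_dominates) auto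
  then have "b * (4 * (Lam * CARD('n) + k) * q + 4 * lam * min 0 (q - 2 * s) - a * q\<^sup>2) \<le> b * (- m)"
    using \<open>0 \<le> b\<close> by (rule mult_left_mono)
  moreover have "min 0 (4 * b * q - 8 * b * s) = 4 * b * min 0 (q - 2 * s)"
    using min_mult_distrib_left[of "4 * b" 0 "q - 2 * s"] \<open>0 \<le> b\<close> by (simp add: algebra_simps)
  moreover have "B * exp (- a) * m \<le> b * m"
    using assms(1) lam_pos unfolding m_def by (intro mult_right_mono) auto
  ultimately show ?thesis
    using \<kappa>_small unfolding m_def by (simp add: algebra_simps)
qed

lemma test_function_bound:
  fixes x :: "real^'n" and t :: real
  defines "b \<equiv> barrier_amp B a t" and "q \<equiv> (barrier_rad k t)\<^sup>2 - x \<bullet> x"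
  assumes "-1 < t" "t < 0" and inside: "x \<bullet> x < (barrier_rad k t)\<^sup>2"
    and M: "transpose M = M" "\<forall>u. u \<bullet> (M *v u) \<le> u \<bullet> (barrier_hessian b q x *v u)"
  shows "pucci_max lam Lam M - snd (barrier_grad B a k (x, t))
      + \<kappa> * phi (norm (fst (barrier_grad B a k (x, t))))
    \<le> b * (4 * (Lam * CARD('n) + k)) * q + lam * min 0 (4 * b * q - 8 * b * (x \<bullet> x)) - a * b * q\<^sup>2
      + \<kappa> * phi (4 * B)"
proof -
  define \<rho> where "\<rho> = barrier_rad k t"
  define \<rho>' where "\<rho>' = barrier_rad' k t"
  have "0 < q" using inside unfolding q_def by simp
  have b: "0 \<le> b" "b \<le> B"
    unfolding b_def using a_nonneg B_pos assms(3) by (auto intro: barrier_amp_nonneg barrier_amp_le)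
  have "0 \<le> \<rho>" "\<rho> \<le> 9/10" "0 \<le> \<rho>'" "\<rho>' \<le> k"
    unfolding \<rho>_def \<rho>'_def using barrier_rad_bounds barrier_rad'_bounds k_nonneg assms(3) by auto
  then have "\<rho> * \<rho>' \<le> 1 * k" "\<rho>\<^sup>2 \<le> 1"
    by (intro mult_mono power_le_one; simp)+
  then have "q \<le> 1"
    using inner_ge_zero[of x] unfolding q_def \<rho>_def by linarith
  have "(norm x)\<^sup>2 \<le> 1\<^sup>2"
    using inside \<open>\<rho>\<^sup>2 \<le> 1\<close> unfolding \<rho>_def by (simp add: power2_norm_eq_inner)
  then have "norm x \<le> 1"
    by (rule power2_le_imp_le) simp
  have pucci: "pucci_max lam Lam M \<le> Lam * CARD('n) * (4 * b * q) + lam * min 0 (4 * b * q - 8 * b * (x \<bullet> x))"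
    using pucci_max_le_if_quadratic_form_le[of lam Lam M "4 * b * q" "8 * b" x] lam_pos Lam_nonneg
      M \<open>0 < q\<close> b(1) unfolding barrier_hessian_quadratic_form by simp
  have "4 * b * q * (\<rho> * \<rho>') \<le> 4 * b * q * k"
    using \<open>\<rho> * \<rho>' \<le> 1 * k\<close> b(1) \<open>0 < q\<close> by (intro mult_left_mono) auto
  then have time: "Lam * CARD('n) * (4 * b * q) - snd (barrier_grad B a k (x, t))
      \<le> b * (4 * (Lam * CARD('n) + k)) * q - a * b * q\<^sup>2"
    using barrier_time_gradient[OF inside, of B a] unfolding b_def[symmetric] q_def[symmetric] \<rho>_def \<rho>'_def
    by (simp add: power2_eq_square algebra_simps)
  have "b * (q * norm x) \<le> B * 1"
    using b \<open>0 < q\<close> \<open>q \<le> 1\<close> \<open>norm x \<le> 1\<close> by (intro mult_mono) (auto simp: mult_le_one)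
  then have "norm (fst (barrier_grad B a k (x, t))) \<le> 4 * B"
    using barrier_spatial_gradient[OF inside, of B a] b(1) \<open>0 < q\<close> unfolding b_def[symmetric] q_def[symmetric]
    by simp
  then have "\<kappa> * phi (norm (fst (barrier_grad B a k (x, t)))) \<le> \<kappa> * phi (4 * B)"
    using phi_mono \<kappa>_nonneg B_pos by (intro mult_left_mono) (auto elim!: mono_onD)
  with pucci time show ?thesis
    by linarith
qed

lemma pointwise_estimate:
  assumes "-1 < t" "t < 0" and inside: "x \<bullet> x < (barrier_rad k t)\<^sup>2"
    and M: "transpose M = M"
      "\<forall>u. u \<bullet> (M *v u)
        \<le> u \<bullet> (barrier_hessian (barrier_amp B a t) ((barrier_rad k t)\<^sup>2 - x \<bullet> x) x *v u)"
  shows "pucci_max lam Lam M - snd (barrier_grad B a k (x, t))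
      + \<kappa> * phi (norm (fst (barrier_grad B a k (x, t)))) \<le> g (x, t)"
proof (cases "t \<le> T")
  case True
  have amp: "0 \<le> barrier_amp B a t" "barrier_amp B a t \<le> B"
    using a_nonneg B_pos assms(1) by (auto intro: barrier_amp_nonneg barrier_amp_le)
  have "(barrier_rad k t)\<^sup>2 \<le> 1"
    using barrier_rad_bounds[OF k_nonneg, of t] assms(1) by (auto intro!: power_le_one)
  then have "(barrier_rad k t)\<^sup>2 - x \<bullet> x \<le> 1"
    using inner_ge_zero[of x] by linarith
  moreover have "0 < (barrier_rad k t)\<^sup>2 - x \<bullet> x"
    using inside by simp
  ultimately have "barrier_amp B a t * (4 * (Lam * CARD('n) + k)) * ((barrier_rad k t)\<^sup>2 - x \<bullet> x)
      + lam * min 0 (4 * barrier_amp B a t * ((barrier_rad k t)\<^sup>2 - x \<bullet> x)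
        - 8 * barrier_amp B a t * (x \<bullet> x))
      - a * barrier_amp B a t * ((barrier_rad k t)\<^sup>2 - x \<bullet> x)\<^sup>2 \<le> 4 * B * (Lam * CARD('n) + k)"
    using amp by (intro drift_bound_early) auto
  moreover have "4 * B * (Lam * CARD('n) + k) + \<kappa> * phi (4 * B) \<le> g (x, t)"
    using g_early assms(1) True inside by blast
  ultimately show ?thesis
    using test_function_bound[OF assms] by linarith
next
  case False
  then have "barrier_amp B a t * (4 * (Lam * CARD('n) + k)) * ((barrier_rad k t)\<^sup>2 - x \<bullet> x)
      + lam * min 0 (4 * barrier_amp B a t * ((barrier_rad k t)\<^sup>2 - x \<bullet> x)
        - 8 * barrier_amp B a t * (x \<bullet> x))
      - a * barrier_amp B a t * ((barrier_rad k t)\<^sup>2 - x \<bullet> x)\<^sup>2 + \<kappa> * phi (4 * B) \<le> 0"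
    using a_nonneg B_pos assms(2) rad_late inside
    by (intro drift_bound_late barrier_amp_ge) auto
  then show ?thesis
    using test_function_bound[OF assms] g_nonneg[rule_format, of "(x, t)"] by linarith
qed

lemma test_function_inside:
  fixes \<theta> :: "(real^'n) \<times> real \<Rightarrow> real" and G :: "(real^'n) \<times> real \<Rightarrow> (real^'n) \<times> real"
  assumes t0: "-1 < t0" "t0 < 0" and inside: "x0 \<bullet> x0 < (barrier_rad k t0)\<^sup>2"
    and U: "open U" "(x0, t0) \<in> U"
    and \<theta>: "\<forall>q\<in>U. (\<theta> has_derivative (\<lambda>v. G q \<bullet> v)) (at q)"
    and G: "(G has_derivative G') (at (x0, t0))"
    and below: "\<forall>q\<in>U. \<theta> q \<le> barrier B a k q" and touch: "\<theta> (x0, t0) = barrier B a k (x0, t0)"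
  shows "pucci_max lam Lam (matrix (\<lambda>v. fst (G' (v, 0)))) - snd (G (x0, t0))
    + \<kappa> * phi (norm (fst (G (x0, t0)))) \<le> g (x0, t0)"
proof -
  define V where "V = {y :: real^'n. y \<bullet> y < (barrier_rad k t0)\<^sup>2}"
  have "open V" "x0 \<in> V"
    using inside unfolding V_def by (auto intro!: open_Collect_less continuous_intros)
  have "\<forall>y\<in>V. ((\<lambda>y. barrier B a k (y, t0)) has_derivative
      (\<lambda>v. ((4 * barrier_amp B a t0 * ((barrier_rad k t0)\<^sup>2 - y \<bullet> y)) *\<^sub>R y) \<bullet> v)) (at y)"
  proof
    fix y assume "y \<in> V"
    then have "y \<bullet> y < (barrier_rad k t0)\<^sup>2" unfolding V_def by simp
    with has_derivative_partial_fst[OF barrier_has_derivative[of B a k "(y, t0)"]]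
    show "((\<lambda>y. barrier B a k (y, t0)) has_derivative
        (\<lambda>v. ((4 * barrier_amp B a t0 * ((barrier_rad k t0)\<^sup>2 - y \<bullet> y)) *\<^sub>R y) \<bullet> v)) (at y)"
      by (simp only: barrier_spatial_gradient)
  qed
  note touching = touching_from_below[OF U \<theta> G below touch \<open>open V\<close> \<open>x0 \<in> V\<close> this
      spatial_gradient_has_derivative has_real_derivative_partial_snd[OF barrier_has_derivative]]
  show ?thesis
    using pointwise_estimate[OF t0 inside touching(4,3)] touching(1,2)
    unfolding barrier_spatial_gradient[OF inside] by simp
qed

lemma barrier_visc_ineq: "visc_ineq lam Lam (\<lambda>s. \<kappa> * phi s) (barrier B a k) g"
  unfolding visc_ineq_def
proof (intro ballI allI impI)
  fix p0 :: "(real^'n) \<times> real" and \<theta> :: "(real^'n) \<times> real \<Rightarrow> real"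
    and G :: "(real^'n) \<times> real \<Rightarrow> (real^'n) \<times> real" and G'
  assume "p0 \<in> Q1" and "(\<exists>U. open U \<and> p0 \<in> U \<and> U \<subseteq> Q1 \<and>
      (\<forall>q\<in>U. (\<theta> has_derivative (\<lambda>v. G q \<bullet> v)) (at q) \<and> (G has_derivative G' q) (at q)) \<and>
      (\<forall>v. continuous_on U (\<lambda>q. G' q v)) \<and> (\<forall>q\<in>U. \<theta> q \<le> barrier B a k q))
    \<and> \<theta> p0 = barrier B a k p0"
  then obtain U x0 t0 where p0: "p0 = (x0, t0)" and t0: "-1 < t0" "t0 < 0"
    and U: "open U" "(x0, t0) \<in> U"
    and \<theta>: "\<forall>q\<in>U. (\<theta> has_derivative (\<lambda>v. G q \<bullet> v)) (at q)"
    and G: "(G has_derivative G' (x0, t0)) (at (x0, t0))"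
    and below: "\<forall>q\<in>U. \<theta> q \<le> barrier B a k q" and touch: "\<theta> (x0, t0) = barrier B a k (x0, t0)"
    unfolding Q1_def by (cases p0) auto
  have "(\<chi> i j. fst (G' p0 (axis j 1, 0)) $ i) = matrix (\<lambda>v. fst (G' p0 (v, 0)))"
    by (simp add: matrix_def)
  moreover have "pucci_max lam Lam (matrix (\<lambda>v. fst (G' (x0, t0) (v, 0)))) - snd (G (x0, t0))
      + \<kappa> * phi (norm (fst (G (x0, t0)))) \<le> g (x0, t0)"
  proof (cases "x0 \<bullet> x0 < (barrier_rad k t0)\<^sup>2")
    case True
    then show ?thesis
      by (rule test_function_inside[OF t0 _ U \<theta> G below touch])
  next
    case False
    then have "\<theta> (x0, t0) = 0"
      using touch unfolding barrier_def pos_sq_def by simp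
    moreover have "\<forall>q\<in>U. \<theta> q \<le> 0"
      using below barrier_nonpos[of B] B_pos by (meson less_imp_le order_trans)
    note zero = touching_zero_maximum[OF U \<theta> G this calculation less_imp_le[OF lam_pos] Lam_nonneg]
    show ?thesis
      using zero g_nonneg[rule_format, of "(x0, t0)"] phi_0 by simp
  qed
  ultimately show "pucci_max lam Lam (\<chi> i j. fst (G' p0 (axis j 1, 0)) $ i) - snd (G p0)
      + \<kappa> * phi (norm (fst (G p0))) \<le> g p0"
    unfolding p0 by simp
qed

end

section \<open>The source term and the constants\<close>

definition cutoff :: "real \<Rightarrow> real \<Rightarrow> real \<Rightarrow> real" where
  "cutoff lo hi y = max 0 (min 1 ((hi - y) / (hi - lo)))"

lemma cutoff_bounds: "0 \<le> cutoff lo hi y \<and> cutoff lo hi y \<le> 1"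
  unfolding cutoff_def by simp

lemma cutoff_eq_1: "lo < hi \<Longrightarrow> y \<le> lo \<Longrightarrow> cutoff lo hi y = 1"
  unfolding cutoff_def by simp

lemma cutoff_eq_0: "lo < hi \<Longrightarrow> hi \<le> y \<Longrightarrow> cutoff lo hi y = 0"
  unfolding cutoff_def by (simp add: divide_nonpos_pos)

lemma continuous_on_cutoff [continuous_intros]:
  "continuous_on S f \<Longrightarrow> lo \<noteq> hi \<Longrightarrow> continuous_on S (\<lambda>x. cutoff lo hi (f x))"
  unfolding cutoff_def by (intro continuous_intros) auto

definition source :: "real \<Rightarrow> real \<Rightarrow> real \<Rightarrow> real \<Rightarrow> (real^'n) \<times> real \<Rightarrow> real" where
  "source G T T' c p = G * cutoff T T' (snd p) * cutoff (c/4) (c/2) (norm (fst p))"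

lemma source_bounds: "0 \<le> G \<Longrightarrow> 0 \<le> source G T T' c p \<and> source G T T' c p \<le> G"
  unfolding source_def using cutoff_bounds
  by (smt (verit) mult_le_one mult_nonneg_nonneg mult_left_le)

lemma source_support:
  assumes "T < T'" "T' < -1 + c\<^sup>2" "c = cn TYPE('n)"
  shows "Q1 \<inter> closure {p \<in> Q1. source G T T' c p \<noteq> 0} \<subseteq> (K1 :: ((real^'n) \<times> real) set)"
proof -
  have "0 < c" unfolding assms(3) cn_def by simp
  define Z where "Z = {p :: (real^'n) \<times> real. norm (fst p) \<le> c/2 \<and> snd p \<le> T'}"
  have "{p \<in> Q1. source G T T' c p \<noteq> 0} \<subseteq> Z"
    unfolding Z_def source_def using assms(1) \<open>0 < c\<close> cutoff_eq_0[of T T'] cutoff_eq_0[of "c/4" "c/2"]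
    by (force simp: not_le intro: less_imp_le)
  moreover have "closed Z"
    unfolding Z_def by (intro closed_Collect_conj closed_Collect_le continuous_intros)
  ultimately have "closure {p \<in> Q1. source G T T' c p \<noteq> 0} \<subseteq> Z"
    by (rule closure_minimal)
  moreover have "Q1 \<inter> Z \<subseteq> K1"
  proof clarify
    fix x :: "real^'n" and t assume "(x, t) \<in> Q1" "(x, t) \<in> Z"
    then have "\<bar>x $ i\<bar> < c" "-1 < t" "t < -1 + c\<^sup>2" for i
      using component_le_norm_cart[of x i] \<open>0 < c\<close> assms(2) unfolding Z_def Q1_def by auto
    moreover have "- c < x $ i \<and> x $ i < c" for i
      using \<open>\<bar>x $ i\<bar> < c\<close> unfolding abs_less_iff by linarith
    ultimately show "(x, t) \<in> K1"
      unfolding K1_def assms(3)[symmetric] by simp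
  qed
  ultimately show ?thesis by blast
qed


lemma source_eq:
  assumes "T < T'" "0 < c" "t \<le> T" "norm x \<le> c/4"
  shows "source G T T' c (x, t) = G"
  using assms by (simp add: source_def cutoff_eq_1)

lemma barrier_setup_source:
  fixes lam Lam B a \<kappa> c k T' G :: real and phi :: "real \<Rightarrow> real"
  defines "r \<equiv> 9 * c / 50" and "T \<equiv> -1 + c / (4 * k)"
  assumes "0 < lam" "0 \<le> Lam" "mono_on {0..} phi" "phi 0 = 0" "0 < B" "0 \<le> \<kappa>"
    and "0 < c" "c \<le> 1" "0 < k" "T < T'"
    and "(4 * (Lam * CARD('n) + k) + 1) / (2 * r\<^sup>2 / 3)
      + (4 * (Lam * CARD('n) + k) + 12 * lam)\<^sup>2 / (16 * lam * r\<^sup>2) \<le> a"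
    and "\<kappa> * phi (4 * B) \<le> B * exp (- a) * min (2 * r\<^sup>2 / 3) (4 * lam * r\<^sup>2)"
    and "4 * B * (Lam * CARD('n) + k) + \<kappa> * phi (4 * B) \<le> G"
  shows "barrier_setup lam Lam phi B a k r T \<kappa> (source G T T' c :: (real^'n) \<times> real \<Rightarrow> real)"
proof
  show "\<forall>t>T. r \<le> barrier_rad k t"
  proof (intro allI impI)
    fix t assume "T < t"
    then have "c / 4 \<le> k * (t + 1)"
      using assms(11) unfolding T_def by (simp add: field_simps)
    then show "r \<le> barrier_rad k t"
      unfolding r_def by (rule barrier_rad_ge_late[OF assms(9,10)])
  qed
  have "0 \<le> phi (4 * B)"
    using mono_onD[OF assms(5), of 0 "4 * B"] assms(6,7) by simp
  then have "0 \<le> 4 * B * (Lam * CARD('n) + k) + \<kappa> * phi (4 * B)"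
    using assms(4,7,8,11) by simp
  then have "0 \<le> G"
    using assms(15) by linarith
  then show "\<forall>p. 0 \<le> source G T T' c p"
    using source_bounds by blast
  show "\<forall>x t. -1 < t \<and> t \<le> T \<and> x \<bullet> x < (barrier_rad k t)\<^sup>2
      \<longrightarrow> 4 * B * (Lam * CARD('n) + k) + \<kappa> * phi (4 * B) \<le> (source G T T' c :: (real^'n) \<times> real \<Rightarrow> real) (x, t)"
  proof (intro allI impI)
    fix x :: "real^'n" and t assume "-1 < t \<and> t \<le> T \<and> x \<bullet> x < (barrier_rad k t)\<^sup>2"
    moreover have "9/10 * (k * (t + 1)) \<le> c / 4" if "t \<le> T"
      using that assms(9,11) unfolding T_def by (simp add: field_simps)
    ultimately have "norm x \<le> c / 4"
      using inside_barrier_norm_le[of k t x] assms(11) by fastforce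
    moreover have "t \<le> T"
      using \<open>-1 < t \<and> t \<le> T \<and> _\<close> by simp
    ultimately have "source G T T' c (x, t) = G"
      using source_eq[OF assms(12,9)] by blast
    then show "4 * B * (Lam * CARD('n) + k) + \<kappa> * phi (4 * B) \<le> source G T T' c (x, t)"
      using assms(15) by simp
  qed
qed (use assms in \<open>auto simp: r_def\<close>)

lemma exists_source:
  fixes lam Lam B a \<kappa> c k :: real and phi :: "real \<Rightarrow> real"
  defines "r \<equiv> 9 * c / 50"
  assumes "0 < lam" "0 \<le> Lam" "mono_on {0..} phi" "phi 0 = 0" "0 < B" "0 \<le> \<kappa>"
    and c: "c = cn TYPE('n)" and k: "100 \<le> k * c\<^sup>2"
    and "(4 * (Lam * CARD('n) + k) + 1) / (2 * r\<^sup>2 / 3)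
      + (4 * (Lam * CARD('n) + k) + 12 * lam)\<^sup>2 / (16 * lam * r\<^sup>2) \<le> a"
    and "\<kappa> * phi (4 * B) \<le> B * exp (- a) * min (2 * r\<^sup>2 / 3) (4 * lam * r\<^sup>2)"
  shows "\<exists>g :: (real^'n) \<times> real \<Rightarrow> real. continuous_on Q1 g \<and> bounded (g ` Q1)
    \<and> Q1 \<inter> closure {p\<in>Q1. g p \<noteq> 0} \<subseteq> K1 \<and> visc_ineq lam Lam (\<lambda>s. \<kappa> * phi s) (barrier B a k) g"
proof -
  define T where "T = -1 + c / (4 * k)"
  define T' where "T' = -1 + c / (2 * k)"
  define G where "G = 4 * B * (Lam * CARD('n) + k) + \<kappa> * phi (4 * B)"
  let ?g = "source G T T' c :: (real^'n) \<times> real \<Rightarrow> real"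
  have "0 < c" "c \<le> 1/10"
    unfolding c cn_def by (auto simp: field_simps)
  then have "c \<le> 1" by simp
  moreover have "0 < k * c\<^sup>2"
    using k by linarith
  ultimately have "0 < k" "c < 2 * (k * c\<^sup>2)"
    using k by (auto simp: zero_less_mult_iff)
  then have "T < T'" "T' < -1 + c\<^sup>2"
    unfolding T_def T'_def using \<open>0 < c\<close> by (simp_all add: field_simps power2_eq_square)
  have "barrier_setup lam Lam phi B a k r T \<kappa> ?g"
    unfolding r_def T_def G_def
    using assms(2-7,10,11) \<open>0 < c\<close> \<open>c \<le> 1\<close> \<open>0 < k\<close> \<open>T < T'\<close>
    by (intro barrier_setup_source) (auto simp: r_def T_def)
  then have "visc_ineq lam Lam (\<lambda>s. \<kappa> * phi s) (barrier B a k) ?g"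
    by (rule barrier_setup.barrier_visc_ineq)
  moreover have "continuous_on Q1 ?g"
    unfolding source_def using \<open>T < T'\<close> \<open>0 < c\<close> by (intro continuous_intros) auto
  moreover have "0 \<le> phi (4 * B)"
    using mono_onD[OF assms(4), of 0 "4 * B"] assms(5,6) by simp
  then have "0 \<le> G"
    unfolding G_def using assms(3,6,7) \<open>0 < k\<close> by simp
  moreover have "norm (?g p) \<le> G" for p
    using source_bounds[OF \<open>0 \<le> G\<close>, of T T' c p] by (auto simp: abs_le_iff)
  then have "bounded (?g ` Q1)"
    unfolding bounded_iff by blast
  moreover have "Q1 \<inter> closure {p \<in> Q1. ?g p \<noteq> 0} \<subseteq> K1"
    by (rule source_support[OF \<open>T < T'\<close> \<open>T' < -1 + c\<^sup>2\<close> c])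
  ultimately show ?thesis
    by blast
qed

lemma exists_barrier:
  fixes phi :: "real \<Rightarrow> real"
  assumes "0 < lam" "lam \<le> Lam" and phi: "mono_on {0..} phi" "phi 0 = 0" "\<forall>t>0. 0 < phi t"
  shows "\<exists>\<kappa>0>0. \<exists>h :: (real^'n) \<times> real \<Rightarrow> real.
    (\<exists>L. L-lipschitz_on (Q1 \<union> parab_bdry) h) \<and> (\<forall>p\<in>Q1. h p \<le> 0) \<and> C2x_on {p\<in>Q1. h p < 0} h \<and>
    (\<forall>\<kappa>. 0 \<le> \<kappa> \<and> \<kappa> \<le> \<kappa>0 \<longrightarrow>
      (\<exists>g. continuous_on Q1 g \<and> bounded (g ` Q1) \<and> Q1 \<inter> closure {p\<in>Q1. g p \<noteq> 0} \<subseteq> K1 \<and>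
           visc_ineq lam Lam (\<lambda>s. \<kappa> * phi s) h g)) \<and>
    (\<forall>p\<in>K3. h p \<le> -2) \<and> (\<forall>p\<in>parab_bdry. h p = 0)"
proof -
  define c where "c = cn TYPE('n)"
  define k where "k = 100 / c\<^sup>2"
  define r where "r = 9 * c / 50"
  define m where "m = min (2 * r\<^sup>2 / 3) (4 * lam * r\<^sup>2)"
  define a where "a = (4 * (Lam * CARD('n) + k) + 1) / (2 * r\<^sup>2 / 3)
    + (4 * (Lam * CARD('n) + k) + 12 * lam)\<^sup>2 / (16 * lam * r\<^sup>2)"
  define B where "B = 5 * exp a"
  define \<kappa>0 where "\<kappa>0 = 5 * m / phi (4 * B)"
  have "0 < c"
    unfolding c_def cn_def by simp
  then have "0 < k" "k * c\<^sup>2 = 100" "0 < m"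
    unfolding k_def m_def r_def using assms(1) by auto
  have "0 < B" "B * exp (- a) = 5"
    unfolding B_def by (simp_all add: exp_minus)
  have "0 \<le> a"
    unfolding a_def r_def using assms(1,2) \<open>0 < k\<close> \<open>0 < c\<close>
    by (intro add_nonneg_nonneg divide_nonneg_pos) auto
  have "0 < phi (4 * B)"
    using phi(3) \<open>0 < B\<close> by simp
  then have "0 < \<kappa>0" and \<kappa>0: "\<kappa>0 * phi (4 * B) = B * exp (- a) * m"
    unfolding \<kappa>0_def using \<open>0 < m\<close> \<open>B * exp (- a) = 5\<close> by auto
  let ?h = "barrier B a k :: (real^'n) \<times> real \<Rightarrow> real"
  show ?thesis
  proof (rule exI[of _ \<kappa>0], rule conjI, fact, rule exI[of _ ?h], intro conjI allI impI)
    show "\<exists>L. L-lipschitz_on (Q1 \<union> parab_bdry) ?h"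
      by (rule barrier_lipschitz)
    show "\<forall>p\<in>Q1. ?h p \<le> 0"
      using barrier_nonpos[OF less_imp_le[OF \<open>0 < B\<close>]] by blast
    show "C2x_on {p \<in> Q1. ?h p < 0} ?h"
      by (rule barrier_C2x)
    show "\<forall>p\<in>K3. ?h p \<le> -2"
      using \<open>0 \<le> a\<close> \<open>B * exp (- a) = 5\<close> \<open>k * c\<^sup>2 = 100\<close> unfolding c_def
      by (auto intro!: barrier_le_on_K3)
    show "\<forall>p\<in>parab_bdry. ?h p = 0"
      using barrier_eq_0_on_parab_bdry[OF less_imp_le[OF \<open>0 < k\<close>]] by blast
    fix \<kappa> assume "0 \<le> \<kappa> \<and> \<kappa> \<le> \<kappa>0"
    then have "\<kappa> * phi (4 * B) \<le> B * exp (- a) * m"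
      using \<kappa>0 \<open>0 < phi (4 * B)\<close> by (metis mult_right_mono less_imp_le)
    then show "\<exists>g. continuous_on Q1 g \<and> bounded (g ` Q1) \<and> Q1 \<inter> closure {p \<in> Q1. g p \<noteq> 0} \<subseteq> K1
        \<and> visc_ineq lam Lam (\<lambda>s. \<kappa> * phi s) ?h g"
      using assms(1,2) phi(1,2) \<open>0 < B\<close> \<open>0 \<le> \<kappa> \<and> \<kappa> \<le> \<kappa>0\<close> \<open>k * c\<^sup>2 = 100\<close>
      unfolding m_def r_def by (intro exists_source[OF _ _ _ _ _ _ c_def]) (auto simp: a_def r_def)
  qed
qed

theorem lemma3p1:
  fixes lam Lam Lam0 :: real and phi eta :: "real \<Rightarrow> real"
  assumes "0 < lam" and "lam \<le> Lam"
    and "\<forall>t\<ge>0. phi t = eta t * t"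
    and "\<forall>t\<ge>0. eta t \<ge> 1"
    and "strict_mono_on {0..} phi"
    and "\<forall>t>0. \<exists>e>0. \<exists>L. L-lipschitz_on ({t-e..t+e} \<inter> {0<..}) phi"
    and "\<forall>t\<ge>0. phi t \<ge> t"
    and "\<forall>s t. 0 < s \<and> s \<le> t \<and> t < 1 \<longrightarrow> eta t \<le> eta s"
    and "\<forall>s t. 1 \<le> s \<and> s \<le> t \<longrightarrow> eta s \<le> eta t"
    and "\<forall>\<^sub>F t in at_top. eta differentiable (at t)"
    and "((\<lambda>t. t * deriv eta t / eta t * ln (eta t)) \<longlongrightarrow> 0) at_top"
    and "\<forall>s>0. \<forall>t>0. eta (s * t) \<le> Lam0 * eta s * eta t"
  shows "\<exists>r0>0. \<exists>h :: (real^'n) \<times> real \<Rightarrow> real.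
           (\<exists>L. L-lipschitz_on (Q1 \<union> parab_bdry) h) \<and>
           (\<forall>p\<in>Q1. h p \<le> 0) \<and>
           C2x_on {p\<in>Q1. h p < 0} h \<and>
           (\<forall>r. 0 < r \<and> r \<le> r0 \<longrightarrow>
              (\<exists>g. continuous_on Q1 g \<and> bounded (g ` Q1) \<and>
                   Q1 \<inter> closure {p\<in>Q1. g p \<noteq> 0} \<subseteq> K1 \<and>
                   visc_ineq lam Lam (\<lambda>s. Lam0 * r * eta (1/r) * phi s) h g)) \<and>
           (\<forall>p\<in>K3. h p \<le> -2) \<and>
           (\<forall>p\<in>parab_bdry. h p = 0)"
proof -
  have "phi 0 = 0"
    using assms(3) by simp
  moreover have "\<forall>t>0. 0 < phi t"
    using assms(7) by (auto intro: less_le_trans)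
  ultimately obtain \<kappa>0 and h :: "(real^'n) \<times> real \<Rightarrow> real" where "0 < \<kappa>0"
    and h: "(\<exists>L. L-lipschitz_on (Q1 \<union> parab_bdry) h) \<and> (\<forall>p\<in>Q1. h p \<le> 0)
      \<and> C2x_on {p\<in>Q1. h p < 0} h \<and> (\<forall>p\<in>K3. h p \<le> -2) \<and> (\<forall>p\<in>parab_bdry. h p = 0)"
    and visc: "\<forall>\<kappa>. 0 \<le> \<kappa> \<and> \<kappa> \<le> \<kappa>0 \<longrightarrow> (\<exists>g. continuous_on Q1 g \<and> bounded (g ` Q1)
      \<and> Q1 \<inter> closure {p\<in>Q1. g p \<noteq> 0} \<subseteq> K1 \<and> visc_ineq lam Lam (\<lambda>s. \<kappa> * phi s) h g)"
    using exists_barrier[OF assms(1,2) strict_mono_on_imp_mono_on[OF assms(5)]] by blast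
  have "1 \<le> eta 1" "eta 1 \<le> Lam0 * eta 1 * eta 1"
    using assms(4) assms(12)[rule_format, of 1 1] by simp_all
  then have "0 < Lam0"
    by (smt (verit) mult_nonpos_nonneg)
  then obtain r0 where "0 < r0"
    and "\<forall>r. 0 < r \<and> r \<le> r0 \<longrightarrow> 0 \<le> Lam0 * r * eta (1/r) \<and> Lam0 * r * eta (1/r) \<le> \<kappa>0"
    using small_coefficient[OF assms(4,10,11)] \<open>0 < \<kappa>0\<close> by blast
  with visc have "\<forall>r. 0 < r \<and> r \<le> r0 \<longrightarrow> (\<exists>g. continuous_on Q1 g \<and> bounded (g ` Q1)
      \<and> Q1 \<inter> closure {p\<in>Q1. g p \<noteq> 0} \<subseteq> K1
      \<and> visc_ineq lam Lam (\<lambda>s. Lam0 * r * eta (1/r) * phi s) h g)"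
    by blast
  with h \<open>0 < r0\<close> show ?thesis
    by blast
qed

end
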